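(* Let $\epsilon\in(0,0.015)$ and let $\kappa\ge F^{-1}(\epsilon)$. For $t>0$ put $\delta_t=\kappa\sqrt t$. Then there exists $t_1>0$ (depending on $\kappa$) such that for every $t\in(0,t_1)$: (1) $L_t[\hat s_{t,\delta_t}]<\epsilon$, so $\hat s_{t,\delta_t}$ is feasible for the variational problem defining $r^*_{t,\epsilon}$; and (2) $R[\hat s_{t,\delta_t}]<(1+8\sqrt{\epsilon})\, r^*_{t,\epsilon}$.
   Context: Training set $\{-1,1\}\subset\mathbb R$. For $\sigma>0$, $p_{\mathcal N}(x;\sigma)=(\sqrt{2\pi}\sigma)^{-1}e^{-x^2/(2\sigma^2)}$. For $t>0$, $p_t(x)=\tfrac12\big(p_{\mathcal N}(x+1;\sqrt t)+p_{\mathcal N}(x-1;\sqrt t)\big)$ (noised empirical density). Score matching loss: for measurable $f:\mathbb R\to\mathbb R$, $L_t[f]=t\int_{\mathbb R}|f(x)-\tfrac{d}{dx}\log p_t(x)|^2p_t(x)\,dx\in[0,\infty]$. Smoothed PL-ESF: for $\delta\in(0,1)$, $\hat s_{t,\delta}(x)=-(x+1)/t$ if $x\le\delta-1$; $-(x-1)/t$ if $x\ge 1-\delta$; $\frac{\delta}{1-\delta}\cdot\frac{x}{t}$ if $x\in(\delta-1,1-\delta)$. $F:[0,\infty)\to(0,1]$, $F(\kappa)=2\int_\kappa^\infty(u-\kappa)^2p_{\mathcal N}(u;1)\,du$; it strictly decreases from $1$ to $0$, so $F^{-1}(\epsilon)$ is defined for $\epsilon\in(0,1)$. Admissible functions: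 $g:\mathbb R\to\mathbb R$ is admissible if it is continuous and twice differentiable on $\mathbb R\setminus N$ for some finite set $N$. Non-smoothness: for admissible $g$, $R[g]=\sup\{\sum_{i=1}^{m-1}|g'(x_{i+1})-g'(x_i)|: m\in\mathbb N,\ x_1<\dots<x_m\in\mathbb R\setminus N\}$ (the total variation of $g'$, i.e. $\int|g''|$ in the weak sense). Finally $r^*_{t,\epsilon}=\inf\{R[g]: g \text{ admissible},\ L_t[g]<\epsilon\}$. *)

theory Defs
  imports "HOL-Analysis.Analysis"
begin

definition pN :: "real \<Rightarrow> real \<Rightarrow> real" where
  "pN x \<sigma> = exp (- (x\<^sup>2) / (2 * \<sigma>\<^sup>2)) / (sqrt (2 * pi) * \<sigma>)"

text \<open>Noised empirical density of the training set {-1,1}.\<close>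
definition pt :: "real \<Rightarrow> real \<Rightarrow> real" where
  "pt t x = (pN (x + 1) (sqrt t) + pN (x - 1) (sqrt t)) / 2"

definition Lt :: "real \<Rightarrow> (real \<Rightarrow> real) \<Rightarrow> ennreal" where
  "Lt t f = ennreal t *
     (\<integral>\<^sup>+ x. ennreal ((f x - deriv (\<lambda>y. ln (pt t y)) x)\<^sup>2 * pt t x) \<partial>lborel)"

definition shat :: "real \<Rightarrow> real \<Rightarrow> real \<Rightarrow> real" where
  "shat t \<delta> x =
     (if x \<le> \<delta> - 1 then - (x + 1) / t
      else if x \<ge> 1 - \<delta> then - (x - 1) / t
      else \<delta> / (1 - \<delta>) * (x / t))"

definition F :: "real \<Rightarrow> real" where
  "F \<kappa> = 2 * (LBINT u:{\<kappa>..}. (u - \<kappa>)\<^sup>2 * pN u 1)"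

definition Finv :: "real \<Rightarrow> real" where
  "Finv \<epsilon> = (THE \<kappa>. \<kappa> \<ge> 0 \<and> F \<kappa> = \<epsilon>)"

definition twice_diff_at :: "(real \<Rightarrow> real) \<Rightarrow> real \<Rightarrow> bool" where
  "twice_diff_at g x \<longleftrightarrow>
     (\<exists>U. open U \<and> x \<in> U \<and> (\<forall>y\<in>U. g differentiable (at y)))
     \<and> deriv g differentiable (at x)"

definition admissible :: "(real \<Rightarrow> real) \<Rightarrow> bool" where
  "admissible g \<longleftrightarrow> continuous_on UNIV g \<and>
     (\<exists>N. finite N \<and> (\<forall>x. x \<notin> N \<longrightarrow> g differentiable (at x))
          \<and> (\<forall>x. x \<notin> N \<longrightarrow> deriv g differentiable (at x)))"

text \<open>Non-smoothness: total variation of g' over points where g is twice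
  differentiable (the complement of the minimal exceptional set N).\<close>
definition Rns :: "(real \<Rightarrow> real) \<Rightarrow> ereal" where
  "Rns g = Sup {ereal (\<Sum>i\<in>{1..<m}. \<bar>deriv g (x (Suc i)) - deriv g (x i)\<bar>) | m x.
      m \<ge> 1 \<and> (\<forall>i\<in>{1..<m}. x i < x (Suc i)) \<and> (\<forall>i\<in>{1..m}. twice_diff_at g (x i))}"

definition rstar :: "real \<Rightarrow> real \<Rightarrow> ereal" where
  "rstar t \<epsilon> = Inf {Rns g | g. admissible g \<and> Lt t g < ennreal \<epsilon>}"

end

theory Submission
  imports Defs "HOL-Probability.Distributions" "HOL-Real_Asymp.Real_Asymp"
begin

(* Write delta = kappa * sqrt t. Away from (delta - 1, 1 - delta) the smoothed score agrees
   with the score of p_t up to terms of order exp(-1/(2t)); inside, it replaces the score, which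
   near 1 is about -(x - 1)/t, by a line through the origin. The squared error
   (1 - delta - x)^2 / ((1 - delta) t)^2, weighted by the Gaussian bump at 1, becomes the
   Gaussian tail moment F(kappa) under the substitution x = 1 - sqrt t * u, and the loss is at
   most (3/4) F(kappa) / (1 - delta)^2 + o(1) < epsilon. The non-smoothness of the smoothed
   score is 2/((1 - delta) t).
   Conversely, if L_t[g] < epsilon, then on each of the four windows +-1 +- [sqrt t, 5 sqrt t/2],
   which carry Gaussian mass at least 0.14, g comes within (3.8 sqrt epsilon + o(1)) / sqrt t of
   the score, which there is -(x -+ 1)/t up to exp(-1/t). Chords of g between these windows have
   slopes at most -(1 - rho)/t, at least 0 and at most -(1 - rho)/t in turn, so by the mean value
   theorem R[g] >= 2(1 - rho)/t with rho -> 3.8 sqrt epsilon. The ratio of the two bounds tends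
   to 1/(1 - 3.8 sqrt epsilon) < 1 + 8 sqrt epsilon. *)

section \<open>The score of the noised density\<close>

definition gauss_neg :: "real \<Rightarrow> real \<Rightarrow> real" where
  "gauss_neg t x = exp (-((x + 1)^2) / (2*t))"

definition gauss_pos :: "real \<Rightarrow> real \<Rightarrow> real" where
  "gauss_pos t x = exp (-((x - 1)^2) / (2*t))"

definition score :: "real \<Rightarrow> real \<Rightarrow> real" where
  "score t x = (-(x + 1) * gauss_neg t x - (x - 1) * gauss_pos t x) / (t * (gauss_neg t x + gauss_pos t x))"

lemma gauss_neg_pos [simp]: "gauss_neg t x > 0"
  by (simp add: gauss_neg_def)

lemma gauss_pos_pos [simp]: "gauss_pos t x > 0"
  by (simp add: gauss_pos_def)

lemma gauss_sum_pos: "gauss_neg t x + gauss_pos t x > 0"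
  by (simp add: add_pos_pos)

lemma pN_sqrt: "t > 0 \<Longrightarrow> pN y (sqrt t) = exp (-(y^2) / (2*t)) / (sqrt (2*pi) * sqrt t)"
  by (simp add: pN_def)

lemma pt_eq_gauss:
  "t > 0 \<Longrightarrow> pt t x = (gauss_neg t x + gauss_pos t x) / (2 * sqrt (2*pi) * sqrt t)"
  by (simp add: pt_def pN_sqrt gauss_neg_def gauss_pos_def add_divide_distrib)

lemma gauss_neg_has_real_derivative:
  "t > 0 \<Longrightarrow> (gauss_neg t has_real_derivative (-(x + 1)/t * gauss_neg t x)) (at x)"
  unfolding gauss_neg_def by (auto intro!: derivative_eq_intros simp: field_simps power2_eq_square)

lemma gauss_pos_has_real_derivative:
  "t > 0 \<Longrightarrow> (gauss_pos t has_real_derivative (-(x - 1)/t * gauss_pos t x)) (at x)"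
  unfolding gauss_pos_def by (auto intro!: derivative_eq_intros simp: field_simps power2_eq_square)

lemma ln_pt_has_real_derivative:
  assumes "t > 0"
  shows "((\<lambda>y. ln (pt t y)) has_real_derivative score t x) (at x)"
proof -
  define c where "c = 2 * sqrt (2*pi) * sqrt t"
  have c: "c > 0" using assms by (simp add: c_def)
  have eq: "(\<lambda>y. ln (pt t y)) = (\<lambda>y. ln (gauss_neg t y + gauss_pos t y) - ln c)"
  proof
    fix y
    show "ln (pt t y) = ln (gauss_neg t y + gauss_pos t y) - ln c"
      using assms c gauss_sum_pos[of t y] by (simp add: pt_eq_gauss c_def ln_div)
  qed
  have "((\<lambda>y. ln (gauss_neg t y + gauss_pos t y) - ln c) has_real_derivative
      (1 / (gauss_neg t x + gauss_pos t x)) * (-(x + 1)/t * gauss_neg t x + -(x - 1)/t * gauss_pos t x) - 0)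
      (at x)"
    by (intro derivative_intros DERIV_ln_divide[unfolded inverse_eq_divide] DERIV_chain2[where f=ln]
        gauss_neg_has_real_derivative gauss_pos_has_real_derivative assms) (auto intro: add_pos_pos)
  moreover have "(1 / (gauss_neg t x + gauss_pos t x))
      * (-(x + 1)/t * gauss_neg t x + -(x - 1)/t * gauss_pos t x) - 0 = score t x"
  proof -
    have "t * gauss_neg t x + t * gauss_pos t x > 0" "t * (t * gauss_neg t x) + t * (t * gauss_pos t x) > 0"
      using assms by (auto intro!: add_pos_pos)
    then show ?thesis using assms gauss_sum_pos[of t x] unfolding score_def by (simp add: field_simps)
  qed
  ultimately show ?thesis unfolding eq by simp
qed

lemma deriv_ln_pt: "t > 0 \<Longrightarrow> deriv (\<lambda>y. ln (pt t y)) x = score t x"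
  using ln_pt_has_real_derivative DERIV_imp_deriv by blast

lemma score_eq_right:
  assumes "t > 0"
  shows "t * score t x = -(x - 1) - 2 * gauss_neg t x / (gauss_neg t x + gauss_pos t x)"
proof -
  have "-(x + 1) * gauss_neg t x - (x - 1) * gauss_pos t x
      = -(x - 1) * (gauss_neg t x + gauss_pos t x) - 2 * gauss_neg t x"
    by (simp add: algebra_simps)
  moreover have "t * score t x
      = (-(x + 1) * gauss_neg t x - (x - 1) * gauss_pos t x) / (gauss_neg t x + gauss_pos t x)"
    using assms by (simp add: score_def)
  ultimately show ?thesis
    using gauss_sum_pos[of t x] by (simp add: diff_divide_distrib)
qed

lemma gauss_neg_minus [simp]: "gauss_neg t (-x) = gauss_pos t x"
  by (simp add: gauss_neg_def gauss_pos_def power2_commute add.commute)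

lemma gauss_pos_minus [simp]: "gauss_pos t (-x) = gauss_neg t x"
  by (simp add: gauss_neg_def gauss_pos_def power2_commute add.commute)

lemma score_minus: "score t (-x) = - score t x"
proof -
  have "-(-x + 1) * gauss_pos t x - (-x - 1) * gauss_neg t x
      = -(-(x + 1) * gauss_neg t x - (x - 1) * gauss_pos t x)"
    by (simp add: algebra_simps)
  then show ?thesis by (simp add: score_def add.commute minus_divide_left)
qed

lemma pt_minus: "t > 0 \<Longrightarrow> pt t (-x) = pt t x"
  by (simp add: pt_eq_gauss add.commute)

lemma gauss_neg_le: "t > 0 \<Longrightarrow> gauss_neg t x \<le> exp (-1/(2*t)) * exp (-x/t)"
proof -
  assume t: "t > 0"
  have "1 + 2*x \<le> (x + 1)^2" by (simp add: power2_eq_square algebra_simps)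
  then have "(1 + 2*x)/(2*t) \<le> (x + 1)^2/(2*t)" using t by (intro divide_right_mono) auto
  moreover have "(1 + 2*x)/(2*t) = 1/(2*t) + x/t" using t by (simp add: field_simps)
  ultimately have "-((x + 1)^2)/(2*t) \<le> -1/(2*t) + -x/t" by (simp add: minus_divide_left[symmetric])
  then show ?thesis unfolding gauss_neg_def by (simp add: exp_add[symmetric])
qed

lemma gauss_neg_div_gauss_pos: "t > 0 \<Longrightarrow> gauss_neg t x / gauss_pos t x = exp (-2*x/t)"
  unfolding gauss_neg_def gauss_pos_def
  by (simp add: exp_diff[symmetric] power2_eq_square field_simps)

lemma score_error_right:
  assumes t: "t > 0" and x: "x \<ge> 1/2"
  shows "\<bar>t * score t x + (x - 1)\<bar> \<le> 2 * exp (-1/t)"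
proof -
  define a where "a = gauss_neg t x"
  define b where "b = gauss_pos t x"
  have a: "a > 0" and b: "b > 0" by (auto simp: a_def b_def)
  have "t * score t x + (x - 1) = - (2*a/(a + b))"
    using score_eq_right[OF t, of x] by (simp add: a_def b_def)
  then have "\<bar>t * score t x + (x - 1)\<bar> = 2*a/(a + b)" using a b by simp
  also have "\<dots> \<le> 2*a/b" using a b by (intro divide_left_mono) auto
  also have "\<dots> = 2 * exp (-2*x/t)"
    using gauss_neg_div_gauss_pos[OF t, of x] by (simp add: a_def b_def)
  also have "\<dots> \<le> 2 * exp (-1/t)"
    using t x by (simp add: divide_right_mono)
  finally show ?thesis .
qed

lemma score_error:
  assumes t: "t > 0" and c: "c = 1 \<or> c = -1" and x: "c * x \<ge> 1/2"
  shows "\<bar>t * score t x + (x - c)\<bar> \<le> 2 * exp (-1/t)"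
  using c
proof
  assume "c = 1"
  then show ?thesis using score_error_right[OF t, of x] x by simp
next
  assume c: "c = -1"
  then have "\<bar>t * score t (-x) + (-x - 1)\<bar> \<le> 2 * exp (-1/t)"
    using score_error_right[OF t, of "-x"] x by simp
  then show ?thesis using c by (simp add: score_minus abs_minus_commute)
qed

section \<open>The smoothed score\<close>

lemma shat_eq_max_min:
  assumes t: "t > 0" and d: "0 \<le> \<delta>" "\<delta> < 1"
  shows "shat t \<delta> x = max (-(x + 1)/t) (min (\<delta>/(1-\<delta>)*(x/t)) (-(x - 1)/t))"
proof -
  have m1: "\<delta>/(1-\<delta>)*(x/t) - (-(x + 1)/t) = (x + 1 - \<delta>)/((1-\<delta>)*t)"
    using t d by (simp add: field_simps)
  have m2: "-(x - 1)/t - \<delta>/(1-\<delta>)*(x/t) = (1 - \<delta> - x)/((1-\<delta>)*t)"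
    using t d by (simp add: field_simps)
  have m3: "-(x - 1)/t - (-(x + 1)/t) = 2/t" using t by (simp add: field_simps)
  have pos: "(1-\<delta>)*t > 0" using t d by simp
  consider "x \<le> \<delta> - 1" | "\<delta> - 1 < x" "x < 1 - \<delta>" | "1 - \<delta> \<le> x" by linarith
  then show ?thesis
  proof cases
    case 1
    have "(x + 1 - \<delta>)/((1-\<delta>)*t) \<le> 0" using 1 pos by (simp add: divide_nonpos_pos)
    moreover have "(1 - \<delta> - x)/((1-\<delta>)*t) \<ge> 0" using 1 pos d by simp
    ultimately show ?thesis using 1 m1 m2 by (simp add: shat_def max_def min_def)
  next
    case 2
    then have "(1 - \<delta> - x)/((1-\<delta>)*t) \<ge> 0" "(x + 1 - \<delta>)/((1-\<delta>)*t) \<ge> 0" using pos by simp_all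
    then show ?thesis using 2 m1 m2 by (simp add: shat_def max_def min_def)
  next
    case 3
    have "(1 - \<delta> - x)/((1-\<delta>)*t) \<le> 0" using 3 pos by (simp add: divide_nonpos_pos)
    then have "min (\<delta>/(1-\<delta>)*(x/t)) (-(x - 1)/t) = -(x - 1)/t" using m2 by linarith
    moreover have "-(x + 1)/t \<le> -(x - 1)/t" using m3 t by (simp add: divide_right_mono)
    ultimately show ?thesis using 3 d by (simp add: shat_def)
  qed
qed

lemma continuous_on_shat:
  assumes "t > 0" "0 \<le> \<delta>" "\<delta> < 1"
  shows "continuous_on UNIV (shat t \<delta>)"
proof -
  have "shat t \<delta> = (\<lambda>x. max (-(x + 1)/t) (min (\<delta>/(1-\<delta>)*(x/t)) (-(x - 1)/t)))"
    using shat_eq_max_min[OF assms] by blast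
  then show ?thesis using assms by (auto intro!: continuous_intros)
qed

lemma shat_minus: "0 \<le> \<delta> \<Longrightarrow> \<delta> < 1 \<Longrightarrow> shat t \<delta> (-x) = - shat t \<delta> x"
  by (auto simp: shat_def diff_divide_distrib add_divide_distrib)

lemma shat_has_real_derivative_left:
  assumes "t > 0" and "z < \<delta> - 1"
  shows "(shat t \<delta> has_real_derivative (-1/t)) (at z)"
proof -
  have "((\<lambda>x. -(x + 1)/t) has_real_derivative (-1/t)) (at z)"
    using assms by (auto intro!: derivative_eq_intros)
  then show ?thesis
    by (rule has_field_derivative_transform_within_open[where S="{..<\<delta>-1}"])
       (use assms in \<open>auto simp: shat_def\<close>)
qed

lemma shat_has_real_derivative_right:
  assumes "t > 0" and "z > 1 - \<delta>" and "\<delta> < 1"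
  shows "(shat t \<delta> has_real_derivative (-1/t)) (at z)"
proof -
  have "((\<lambda>x. -(x - 1)/t) has_real_derivative (-1/t)) (at z)"
    using assms by (auto intro!: derivative_eq_intros)
  then show ?thesis
    by (rule has_field_derivative_transform_within_open[where S="{1-\<delta><..}"])
       (use assms in \<open>auto simp: shat_def\<close>)
qed

lemma shat_has_real_derivative_mid:
  assumes "t > 0" and "\<delta> - 1 < z" "z < 1 - \<delta>"
  shows "(shat t \<delta> has_real_derivative (\<delta>/((1-\<delta>)*t))) (at z)"
proof -
  have "((\<lambda>x. \<delta>/(1-\<delta>)*(x/t)) has_real_derivative (\<delta>/((1-\<delta>)*t))) (at z)"
    using assms by (auto intro!: derivative_eq_intros)
  then show ?thesis
    by (rule has_field_derivative_transform_within_open[where S="{\<delta>-1<..<1-\<delta>}"])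
       (use assms in \<open>auto simp: shat_def\<close>)
qed

lemma not_differentiable_at_kink:
  fixes f g h :: "real \<Rightarrow> real"
  assumes "r > 0"
    and left: "\<And>y. x - r < y \<Longrightarrow> y \<le> x \<Longrightarrow> f y = g y"
    and right: "\<And>y. x \<le> y \<Longrightarrow> y < x + r \<Longrightarrow> f y = h y"
    and g: "(g has_real_derivative a) (at x)" and h: "(h has_real_derivative b) (at x)"
    and "a \<noteq> b"
  shows "\<not> f differentiable (at x)"
proof
  assume "f differentiable (at x)"
  then obtain D where D: "(f has_real_derivative D) (at x)"
    using real_differentiable_def by blast
  have quotient_tendsto: "((\<lambda>y. (k y - k x) / (y - x)) \<longlongrightarrow> c) (at x within S)"
    if "(k has_real_derivative c) (at x)" for k :: "real \<Rightarrow> real" and c S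
    using has_field_derivative_at_within[OF that] by (simp add: has_field_derivative_iff)
  have "eventually (\<lambda>y. (f y - f x) / (y - x) = (g y - g x) / (y - x)) (at_left x)"
    using eventually_at_left_real[of "x - r" x] \<open>r > 0\<close>
    by (auto elim!: eventually_mono simp: left[of x] intro: left)
  from tendsto_cong[OF this, THEN iffD1, OF quotient_tendsto[OF D]]
  have "D = a" by (rule tendsto_unique[OF trivial_limit_at_left_real _ quotient_tendsto[OF g]])
  have "eventually (\<lambda>y. (f y - f x) / (y - x) = (h y - h x) / (y - x)) (at_right x)"
    using eventually_at_right_real[of x "x + r"] \<open>r > 0\<close>
    by (auto elim!: eventually_mono simp: right[of x] intro: right)
  from tendsto_cong[OF this, THEN iffD1, OF quotient_tendsto[OF D]]
  have "D = b" by (rule tendsto_unique[OF trivial_limit_at_right_real _ quotient_tendsto[OF h]])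
  with \<open>D = a\<close> \<open>a \<noteq> b\<close> show False by simp
qed

lemma shat_not_differentiable_left_kink:
  assumes t: "t > 0" and d: "0 \<le> \<delta>" "\<delta> < 1"
  shows "\<not> shat t \<delta> differentiable (at (\<delta> - 1))"
proof (rule not_differentiable_at_kink[where r = "2 - 2*\<delta>" and g = "\<lambda>y. -(y + 1)/t"
      and h = "\<lambda>y. \<delta>/(1-\<delta>)*(y/t)" and a = "-1/t" and b = "\<delta>/(1-\<delta>)*(1/t)"])
  show "((\<lambda>y. -(y + 1)/t) has_real_derivative -1/t) (at (\<delta> - 1))"
    using t d by (auto intro!: derivative_eq_intros)
  show "((\<lambda>y. \<delta>/(1-\<delta>)*(y/t)) has_real_derivative \<delta>/(1-\<delta>)*(1/t)) (at (\<delta> - 1))"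
    using t d by (auto intro!: derivative_eq_intros)
  have "-1/t < 0" "0 \<le> \<delta>/(1-\<delta>)*(1/t)" using t d by auto
  then show "-1/t \<noteq> \<delta>/(1-\<delta>)*(1/t)" by linarith
  fix y
  show "shat t \<delta> y = \<delta>/(1-\<delta>)*(y/t)" if "\<delta> - 1 \<le> y" "y < \<delta> - 1 + (2 - 2*\<delta>)"
    using that t d by (cases "y = \<delta> - 1") (auto simp: shat_def field_simps)
qed (use t d in \<open>auto simp: shat_def\<close>)

lemma shat_not_differentiable_right_kink:
  assumes t: "t > 0" and d: "0 \<le> \<delta>" "\<delta> < 1"
  shows "\<not> shat t \<delta> differentiable (at (1 - \<delta>))"
proof (rule not_differentiable_at_kink[where r = "2 - 2*\<delta>" and g = "\<lambda>y. \<delta>/(1-\<delta>)*(y/t)"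
      and h = "\<lambda>y. -(y - 1)/t" and a = "\<delta>/(1-\<delta>)*(1/t)" and b = "-1/t"])
  show "((\<lambda>y. \<delta>/(1-\<delta>)*(y/t)) has_real_derivative \<delta>/(1-\<delta>)*(1/t)) (at (1 - \<delta>))"
    using t d by (auto intro!: derivative_eq_intros)
  show "((\<lambda>y. -(y - 1)/t) has_real_derivative -1/t) (at (1 - \<delta>))"
    using t d by (auto intro!: derivative_eq_intros)
  have "-1/t < 0" "0 \<le> \<delta>/(1-\<delta>)*(1/t)" using t d by auto
  then show "\<delta>/(1-\<delta>)*(1/t) \<noteq> -1/t" by linarith
  fix y
  show "shat t \<delta> y = \<delta>/(1-\<delta>)*(y/t)" if "1 - \<delta> - (2 - 2*\<delta>) < y" "y \<le> 1 - \<delta>"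
  proof (cases "y = 1 - \<delta>")
    case True
    then show ?thesis using t d by (simp add: shat_def)
  next
    case False
    then show ?thesis using that by (simp add: shat_def)
  qed
qed (use t d in \<open>auto simp: shat_def\<close>)

lemma deriv_shat:
  assumes t: "t > 0" and d: "0 \<le> \<delta>" "\<delta> < 1" and z: "z \<noteq> \<delta> - 1" "z \<noteq> 1 - \<delta>"
  shows "deriv (shat t \<delta>) z = (if \<delta> - 1 < z \<and> z < 1 - \<delta> then \<delta>/((1-\<delta>)*t) else -1/t)"
proof -
  consider "z < \<delta> - 1" | "\<delta> - 1 < z" "z < 1 - \<delta>" | "z > 1 - \<delta>" using z by linarith
  then show ?thesis
  proof cases
    case 1
    then show ?thesis using shat_has_real_derivative_left[OF t 1] DERIV_imp_deriv by auto
  next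
    case 2
    then show ?thesis using shat_has_real_derivative_mid[OF t 2] DERIV_imp_deriv by auto
  next
    case 3
    then show ?thesis using shat_has_real_derivative_right[OF t 3 d(2)] DERIV_imp_deriv d by auto
  qed
qed

lemma shat_twice_differentiable:
  assumes t: "t > 0" and d: "0 \<le> \<delta>" "\<delta> < 1" and z: "z \<noteq> \<delta> - 1" "z \<noteq> 1 - \<delta>"
  shows "shat t \<delta> differentiable (at z) \<and> deriv (shat t \<delta>) differentiable (at z)"
proof -
  define S where "S = (if z < \<delta> - 1 then {..<\<delta>-1} else if z < 1 - \<delta> then {\<delta>-1<..<1-\<delta>} else {1-\<delta><..})"
  define c where "c = (if \<delta> - 1 < z \<and> z < 1 - \<delta> then \<delta>/((1-\<delta>)*t) else -1/t)"
  have S: "open S" "z \<in> S" using z d unfolding S_def by auto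
  have const: "deriv (shat t \<delta>) y = c" if "y \<in> S" for y
  proof -
    have "y \<noteq> \<delta> - 1" "y \<noteq> 1 - \<delta>" "(\<delta> - 1 < y \<and> y < 1 - \<delta>) = (\<delta> - 1 < z \<and> z < 1 - \<delta>)"
      using that z d unfolding S_def by (auto split: if_splits)
    then show ?thesis using deriv_shat[OF t d] unfolding c_def by simp
  qed
  have "((\<lambda>_. c) has_real_derivative 0) (at z)" by simp
  then have "(deriv (shat t \<delta>) has_real_derivative 0) (at z)"
    by (rule has_field_derivative_transform_within_open[OF _ S]) (simp add: const)
  moreover have "shat t \<delta> differentiable (at z)"
  proof -
    consider "z < \<delta> - 1" | "\<delta> - 1 < z \<and> z < 1 - \<delta>" | "z > 1 - \<delta>" using z by linarith
    then show ?thesis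
      unfolding real_differentiable_def
      by cases (use shat_has_real_derivative_left[OF t] shat_has_real_derivative_mid[OF t]
          shat_has_real_derivative_right[OF t _ d(2)] in blast)+
  qed
  ultimately show ?thesis by (auto simp: real_differentiable_def)
qed

lemma admissible_shat:
  assumes "t > 0" "0 \<le> \<delta>" "\<delta> < 1"
  shows "admissible (shat t \<delta>)"
  unfolding admissible_def
  using continuous_on_shat[OF assms] shat_twice_differentiable[OF assms]
  by (intro conjI exI[of _ "{\<delta> - 1, 1 - \<delta>}"]) auto

lemma sum_variation_step_function_le:
  fixes f x :: "_ \<Rightarrow> real" and \<alpha> \<beta> A B :: real
  assumes ab: "\<alpha> < \<beta>" "A \<le> B"
    and f: "\<And>z. z \<noteq> \<alpha> \<Longrightarrow> z \<noteq> \<beta> \<Longrightarrow> f z = (if \<alpha> < z \<and> z < \<beta> then B else A)"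
  defines "\<phi> \<equiv> (\<lambda>z::real. if z \<le> \<alpha> then 0 else if z < \<beta> then B - A else 2*(B - A))"
  shows "m \<ge> 1 \<Longrightarrow> (\<forall>i\<in>{1..<m}. x i < x (Suc i)) \<Longrightarrow> (\<forall>i\<in>{1..m}. x i \<noteq> \<alpha> \<and> x i \<noteq> \<beta>)
     \<Longrightarrow> (\<Sum>i\<in>{1..<m}. \<bar>f (x (Suc i)) - f (x i)\<bar>) \<le> \<phi> (x m) - \<phi> (x 1)"
proof (induction m rule: nat_induct_at_least)
  case base
  then show ?case by simp
next
  case (Suc m)
  have IH: "(\<Sum>i\<in>{1..<m}. \<bar>f (x (Suc i)) - f (x i)\<bar>) \<le> \<phi> (x m) - \<phi> (x 1)"
    using Suc by auto
  have lt: "x m < x (Suc m)" using Suc by auto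
  have n1: "x m \<noteq> \<alpha>" "x m \<noteq> \<beta>" and n2: "x (Suc m) \<noteq> \<alpha>" "x (Suc m) \<noteq> \<beta>" using Suc by auto
  have step: "\<bar>f (x (Suc m)) - f (x m)\<bar> \<le> \<phi> (x (Suc m)) - \<phi> (x m)"
    using lt n1 n2 ab unfolding f[OF n1] f[OF n2] \<phi>_def by auto
  have "{1..<Suc m} = insert m {1..<m}" using Suc by auto
  then show ?case using IH step by simp
qed

lemma Rns_shat_le:
  assumes t: "t > 0" and d: "0 \<le> \<delta>" "\<delta> < 1"
  shows "Rns (shat t \<delta>) \<le> ereal (2/((1-\<delta>)*t))"
  unfolding Rns_def
proof (rule Sup_least, clarify)
  fix m :: nat and x :: "nat \<Rightarrow> real"
  assume m: "1 \<le> m" and inc: "\<forall>i\<in>{1..<m}. x i < x (Suc i)"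
    and tw: "\<forall>i\<in>{1..m}. twice_diff_at (shat t \<delta>) (x i)"
  have off_kinks: "\<forall>i\<in>{1..m}. x i \<noteq> \<delta> - 1 \<and> x i \<noteq> 1 - \<delta>"
  proof
    fix i assume "i \<in> {1..m}"
    then have "shat t \<delta> differentiable (at (x i))"
      using tw unfolding twice_diff_at_def by blast
    then show "x i \<noteq> \<delta> - 1 \<and> x i \<noteq> 1 - \<delta>"
      using shat_not_differentiable_left_kink[OF assms] shat_not_differentiable_right_kink[OF assms]
      by metis
  qed
  define A where "A = -1/t"
  define B where "B = \<delta>/((1-\<delta>)*t)"
  have AB: "A \<le> B" using t d unfolding A_def B_def by (simp add: order.trans[of _ 0])
  have "(\<Sum>i\<in>{1..<m}. \<bar>deriv (shat t \<delta>) (x (Suc i)) - deriv (shat t \<delta>) (x i)\<bar>)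
      \<le> (if x m \<le> \<delta> - 1 then 0 else if x m < 1 - \<delta> then B - A else 2*(B - A))
       - (if x 1 \<le> \<delta> - 1 then 0 else if x 1 < 1 - \<delta> then B - A else 2*(B - A))"
    using sum_variation_step_function_le[of "\<delta> - 1" "1 - \<delta>" A B, OF _ AB _ m inc off_kinks]
      deriv_shat[OF assms] d unfolding A_def B_def by simp
  also have "\<dots> \<le> 2*(B - A)" using AB by auto
  also have "2*(B - A) = 2/((1-\<delta>)*t)" using t d unfolding A_def B_def by (simp add: field_simps)
  finally show "ereal (\<Sum>i\<in>{1..<m}. \<bar>deriv (shat t \<delta>) (x (Suc i)) - deriv (shat t \<delta>) (x i)\<bar>)
      \<le> ereal (2/((1-\<delta>)*t))" by simp
qed

section \<open>Non-smoothness of admissible functions\<close>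

lemma min_slope_le_chord:
  fixes g :: "real \<Rightarrow> real"
  assumes "a < c" "c < b"
  shows "min ((g c - g a)/(c - a)) ((g b - g c)/(b - c)) \<le> (g b - g a)/(b - a)"
proof -
  define m where "m = min ((g c - g a)/(c - a)) ((g b - g c)/(b - c))"
  have "m \<le> (g c - g a)/(c - a)" "m \<le> (g b - g c)/(b - c)" by (simp_all add: m_def)
  then have "(c - a) * m \<le> g c - g a" "(b - c) * m \<le> g b - g c"
    using assms by (simp_all add: pos_le_divide_eq mult.commute)
  moreover have "(b - a) * m = (c - a) * m + (b - c) * m" by (simp add: algebra_simps)
  ultimately have "(b - a) * m \<le> g b - g a" by linarith
  then show ?thesis using assms unfolding m_def[symmetric] by (simp add: pos_le_divide_eq mult.commute)
qed

lemma mvt_deriv_le_slope: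
  fixes g :: "real \<Rightarrow> real"
  assumes "finite N" "a < b" "continuous_on {a..b} g"
    and "\<And>x. x \<in> {a<..<b} - N \<Longrightarrow> g differentiable (at x)"
  shows "\<exists>x\<in>{a<..<b} - N. deriv g x \<le> (g b - g a)/(b - a)"
  using assms
proof (induction N arbitrary: a b rule: finite_induct)
  case empty
  then obtain l z where "a < z" "z < b" "DERIV g z :> l" "g b - g a = (b - a) * l"
    using MVT[of a b g] by auto
  then show ?case by (intro bexI[of _ z]) (auto simp: DERIV_imp_deriv)
next
  case (insert c N)
  show ?case
  proof (cases "c \<in> {a<..<b}")
    case False
    then have "{a<..<b} - insert c N = {a<..<b} - N" by auto
    with insert show ?thesis by simp
  next
    case True
    have "continuous_on {a..c} g" "continuous_on {c..b} g"
      using insert.prems(2) True by (auto elim: continuous_on_subset)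
    moreover have "\<And>x. x \<in> {a<..<c} - N \<Longrightarrow> g differentiable (at x)"
      "\<And>x. x \<in> {c<..<b} - N \<Longrightarrow> g differentiable (at x)"
      using insert.prems(3) True by auto
    ultimately obtain x1 x2 where
      x1: "x1 \<in> {a<..<c} - N" "deriv g x1 \<le> (g c - g a)/(c - a)" and
      x2: "x2 \<in> {c<..<b} - N" "deriv g x2 \<le> (g b - g c)/(b - c)"
      using insert.IH[of a c] insert.IH[of c b] True by auto
    have "x1 \<in> {a<..<b} - insert c N" "x2 \<in> {a<..<b} - insert c N" using x1(1) x2(1) True by auto
    moreover consider "deriv g x1 \<le> (g b - g a)/(b - a)" | "deriv g x2 \<le> (g b - g a)/(b - a)"
      using min_slope_le_chord[of a c b g] True x1(2) x2(2) by (auto simp: min_def split: if_splits)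
    ultimately show ?thesis by cases blast+
  qed
qed

lemma mvt_deriv_ge_slope:
  fixes g :: "real \<Rightarrow> real"
  assumes "finite N" "a < b" "continuous_on {a..b} g"
    and diff: "\<And>x. x \<in> {a<..<b} - N \<Longrightarrow> g differentiable (at x)"
  shows "\<exists>x\<in>{a<..<b} - N. deriv g x \<ge> (g b - g a)/(b - a)"
proof -
  have "continuous_on {a..b} (\<lambda>y. - g y)" using assms(3) by (rule continuous_on_minus)
  moreover have "\<And>x. x \<in> {a<..<b} - N \<Longrightarrow> (\<lambda>y. - g y) differentiable (at x)"
    using diff by (simp add: differentiable_minus)
  ultimately obtain x where x: "x \<in> {a<..<b} - N" "deriv (\<lambda>y. - g y) x \<le> (- g b - - g a)/(b - a)"
    using mvt_deriv_le_slope[OF assms(1,2)] by blast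
  have "((\<lambda>y. - g y) has_real_derivative - deriv g x) (at x)"
    using diff[OF x(1)] by (intro DERIV_minus) (simp add: DERIV_deriv_iff_real_differentiable)
  then have "deriv (\<lambda>y. - g y) x = - deriv g x" by (rule DERIV_imp_deriv)
  with x show ?thesis by (intro bexI[of _ x]) (auto simp: field_simps)
qed

lemma admissibleE:
  assumes "admissible g"
  obtains N where "finite N" "continuous_on UNIV g" "\<And>x. x \<notin> N \<Longrightarrow> g differentiable (at x)"
    "\<And>x. x \<notin> N \<Longrightarrow> twice_diff_at g x"
proof -
  obtain N where N: "finite N" "\<forall>x. x \<notin> N \<longrightarrow> g differentiable (at x)"
    "\<forall>x. x \<notin> N \<longrightarrow> deriv g differentiable (at x)" "continuous_on UNIV g"
    using assms unfolding admissible_def by blast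
  have "twice_diff_at g x" if "x \<notin> N" for x
    unfolding twice_diff_at_def
    using N that by (intro conjI exI[of _ "- N"]) (auto simp: finite_imp_closed open_Compl)
  then show ?thesis using that N by blast
qed

lemma Rns_ge_three_points:
  assumes "x1 < x2" "x2 < x3" "twice_diff_at g x1" "twice_diff_at g x2" "twice_diff_at g x3"
  shows "ereal (\<bar>deriv g x2 - deriv g x1\<bar> + \<bar>deriv g x3 - deriv g x2\<bar>) \<le> Rns g"
proof -
  define x where "x = (\<lambda>i::nat. if i = 1 then x1 else if i = 2 then x2 else x3)"
  have s: "{1..<3::nat} = {1,2}" and s3: "{1..3::nat} = {1,2,3}" by auto
  have "(\<Sum>i\<in>{1..<3}. \<bar>deriv g (x (Suc i)) - deriv g (x i)\<bar>)
      = \<bar>deriv g x2 - deriv g x1\<bar> + \<bar>deriv g x3 - deriv g x2\<bar>"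
    unfolding s x_def by simp
  moreover have "ereal (\<Sum>i\<in>{1..<3}. \<bar>deriv g (x (Suc i)) - deriv g (x i)\<bar>) \<le> Rns g"
    unfolding Rns_def
    by (rule Sup_upper) (use assms in \<open>auto simp: s s3 x_def intro!: exI[of _ 3] exI[of _ x]\<close>)
  ultimately show ?thesis by simp
qed

lemma Rns_ge_of_chords:
  fixes g :: "real \<Rightarrow> real"
  assumes "admissible g" and y: "y1 < y2" "y2 < y3" "y3 < y4"
    and s12: "(g y2 - g y1)/(y2 - y1) \<le> - s" and s23: "g y2 \<le> g y3"
    and s34: "(g y4 - g y3)/(y4 - y3) \<le> - s"
  shows "ereal (2 * s) \<le> Rns g"
proof -
  obtain N where N: "finite N" "continuous_on UNIV g" "\<And>x. x \<notin> N \<Longrightarrow> g differentiable (at x)"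
    "\<And>x. x \<notin> N \<Longrightarrow> twice_diff_at g x"
    using admissibleE[OF assms(1)] by blast
  have cont: "continuous_on {a..b} g" for a b using N(2) by (rule continuous_on_subset) auto
  have diff: "g differentiable (at x)" if "x \<in> S - N" for S x using N(3) that by blast
  obtain x1 where x1: "x1 \<in> {y1<..<y2} - N" "deriv g x1 \<le> (g y2 - g y1)/(y2 - y1)"
    using mvt_deriv_le_slope[OF N(1) y(1) cont diff] by blast
  obtain x2 where x2: "x2 \<in> {y2<..<y3} - N" "deriv g x2 \<ge> (g y3 - g y2)/(y3 - y2)"
    using mvt_deriv_ge_slope[OF N(1) y(2) cont diff] by blast
  obtain x3 where x3: "x3 \<in> {y3<..<y4} - N" "deriv g x3 \<le> (g y4 - g y3)/(y4 - y3)"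
    using mvt_deriv_le_slope[OF N(1) y(3) cont diff] by blast
  have slope23: "(g y3 - g y2)/(y3 - y2) \<ge> 0" using s23 y(2) by simp
  have "2 * s \<le> \<bar>deriv g x2 - deriv g x1\<bar> + \<bar>deriv g x3 - deriv g x2\<bar>"
    using x1(2) x2(2) x3(2) s12 s34 slope23 by linarith
  moreover have "ereal (\<bar>deriv g x2 - deriv g x1\<bar> + \<bar>deriv g x3 - deriv g x2\<bar>) \<le> Rns g"
    using x1(1) x2(1) x3(1) N(4) by (intro Rns_ge_three_points) auto
  ultimately show ?thesis by (meson ereal_less_eq(3) order_trans)
qed

section \<open>The Gaussian tail moment\<close>

definition tail_integrand :: "real \<Rightarrow> real \<Rightarrow> real" where
  "tail_integrand \<kappa> u = (max (u - \<kappa>) 0)^2 * pN u 1"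

definition tail_moment :: "real \<Rightarrow> real" where
  "tail_moment \<kappa> = integral\<^sup>L lborel (tail_integrand \<kappa>)"

lemma pN_1_eq_std_normal_density: "pN u 1 = std_normal_density u"
  by (simp add: pN_def std_normal_density_def)

lemma pN_nonneg: "pN u 1 \<ge> 0"
  by (simp add: pN_def)

lemma tail_integrand_nonneg: "tail_integrand \<kappa> u \<ge> 0"
  by (simp add: tail_integrand_def pN_nonneg)

lemma tail_integrand_measurable [measurable]: "tail_integrand \<kappa> \<in> borel_measurable borel"
proof -
  have "continuous_on UNIV (tail_integrand \<kappa>)"
    unfolding tail_integrand_def pN_def by (auto intro!: continuous_intros)
  then show ?thesis by (rule borel_measurable_continuous_onI)
qed

lemma integrable_tail_integrand: "integrable lborel (tail_integrand \<kappa>)"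
proof (rule Bochner_Integration.integrable_bound)
  show "integrable lborel (\<lambda>u. 2 * (pN u 1 * u^2) + 2*\<kappa>^2 * pN u 1)"
    using std_normal_moment_even[of 0] std_normal_moment_even[of 1]
    by (auto simp: pN_1_eq_std_normal_density has_bochner_integral_iff)
  show "AE u in lborel. norm (tail_integrand \<kappa> u) \<le> norm (2 * (pN u 1 * u^2) + 2*\<kappa>^2 * pN u 1)"
  proof (rule AE_I2)
    fix u
    have "(max (u - \<kappa>) 0)^2 \<le> (u - \<kappa>)^2 + (u + \<kappa>)^2"
      by (cases "u \<ge> \<kappa>") (auto simp: max_def)
    also have "\<dots> = 2*u^2 + 2*\<kappa>^2" by (simp add: power2_eq_square algebra_simps)
    finally have "(max (u - \<kappa>) 0)^2 \<le> 2*u^2 + 2*\<kappa>^2" .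
    then have "(max (u - \<kappa>) 0)^2 * pN u 1 \<le> (2*u^2 + 2*\<kappa>^2) * pN u 1"
      using pN_nonneg by (rule mult_right_mono)
    then show "norm (tail_integrand \<kappa> u) \<le> norm (2 * (pN u 1 * u^2) + 2*\<kappa>^2 * pN u 1)"
      using tail_integrand_nonneg[of \<kappa> u] pN_nonneg[of u]
      by (simp add: tail_integrand_def algebra_simps)
  qed
qed simp

lemma F_eq_tail_moment: "F \<kappa> = 2 * tail_moment \<kappa>"
proof -
  have "(\<lambda>u. indicator {\<kappa>..} u *\<^sub>R ((u - \<kappa>)^2 * pN u 1)) = tail_integrand \<kappa>"
    by (auto simp: tail_integrand_def indicator_def max_def fun_eq_iff)
  then show ?thesis by (simp add: F_def tail_moment_def set_lebesgue_integral_def)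
qed

lemma nn_integral_tail_integrand:
  "(\<integral>\<^sup>+u. ennreal (tail_integrand \<kappa> u) \<partial>lborel) = ennreal (tail_moment \<kappa>)"
  unfolding tail_moment_def using integrable_tail_integrand tail_integrand_nonneg
  by (intro nn_integral_eq_integral) auto

lemma tail_moment_nonneg: "tail_moment \<kappa> \<ge> 0"
  unfolding tail_moment_def using tail_integrand_nonneg by (simp add: integral_nonneg)

lemma tail_integrand_convex:
  assumes t: "0 < t" "t < 1"
  shows "tail_integrand ((1 - t)*x + t*y) u \<le> (1 - t) * tail_integrand x u + t * tail_integrand y u"
proof -
  define p where "p = max (u - x) 0"
  define q where "q = max (u - y) 0"
  have "u - ((1 - t)*x + t*y) = (1 - t)*(u - x) + t*(u - y)" by (simp add: algebra_simps)
  moreover have "(1 - t)*(u - x) \<le> (1 - t)*p" "t*(u - y) \<le> t*q" "0 \<le> (1 - t)*p + t*q"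
    using t unfolding p_def q_def by (auto intro!: mult_left_mono)
  ultimately have "max (u - ((1 - t)*x + t*y)) 0 \<le> (1 - t)*p + t*q" by auto
  then have "(max (u - ((1 - t)*x + t*y)) 0)^2 \<le> ((1 - t)*p + t*q)^2"
    by (intro power_mono) auto
  also have "\<dots> \<le> (1 - t)*p^2 + t*q^2"
  proof -
    have "(1 - t)*p^2 + t*q^2 - ((1 - t)*p + t*q)^2 = t*(1 - t)*(p - q)^2"
      by (simp add: power2_eq_square algebra_simps)
    moreover have "t*(1 - t)*(p - q)^2 \<ge> 0" using t by simp
    ultimately show ?thesis by linarith
  qed
  finally have "(max (u - ((1 - t)*x + t*y)) 0)^2 * pN u 1 \<le> ((1 - t)*p^2 + t*q^2) * pN u 1"
    using pN_nonneg by (rule mult_right_mono)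
  then show ?thesis unfolding tail_integrand_def p_def q_def by (simp add: algebra_simps)
qed

lemma convex_on_tail_moment: "convex_on UNIV tail_moment"
proof (rule convex_onI)
  fix t x y :: real assume t: "0 < t" "t < 1"
  have "tail_moment ((1 - t) *\<^sub>R x + t *\<^sub>R y) = integral\<^sup>L lborel (tail_integrand ((1 - t)*x + t*y))"
    by (simp add: tail_moment_def)
  also have "\<dots> \<le> integral\<^sup>L lborel (\<lambda>u. (1 - t) * tail_integrand x u + t * tail_integrand y u)"
    using tail_integrand_convex[OF t] integrable_tail_integrand by (intro integral_mono) auto
  also have "\<dots> = (1 - t) * tail_moment x + t * tail_moment y"
    using integrable_tail_integrand by (simp add: tail_moment_def)
  finally show "tail_moment ((1 - t) *\<^sub>R x + t *\<^sub>R y) \<le> (1 - t) * tail_moment x + t * tail_moment y" .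
qed simp

lemma continuous_on_tail_moment: "continuous_on UNIV tail_moment"
  using convex_on_continuous[OF open_UNIV convex_on_tail_moment] .

lemma tail_moment_antimono: "\<kappa>1 \<le> \<kappa>2 \<Longrightarrow> tail_moment \<kappa>2 \<le> tail_moment \<kappa>1"
  unfolding tail_moment_def
proof (rule integral_mono[OF integrable_tail_integrand integrable_tail_integrand])
  fix u assume "\<kappa>1 \<le> \<kappa>2"
  then have "(max (u - \<kappa>2) 0)^2 \<le> (max (u - \<kappa>1) 0)^2" by (intro power_mono) auto
  then show "tail_integrand \<kappa>2 u \<le> tail_integrand \<kappa>1 u"
    unfolding tail_integrand_def using pN_nonneg by (rule mult_right_mono)
qed

lemma tail_moment_le:
  assumes "\<kappa> > 0"
  shows "tail_moment \<kappa> \<le> 3/\<kappa>^2"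
proof -
  have "tail_moment \<kappa> \<le> integral\<^sup>L lborel (\<lambda>u. pN u 1 * u^4 / \<kappa>^2)"
    unfolding tail_moment_def
  proof (rule integral_mono[OF integrable_tail_integrand])
    show "integrable lborel (\<lambda>u. pN u 1 * u^4 / \<kappa>^2)"
      using std_normal_moment_even[of 2] by (simp add: pN_1_eq_std_normal_density has_bochner_integral_iff)
    fix u
    have "(max (u - \<kappa>) 0)^2 \<le> u^4/\<kappa>^2"
    proof (cases "u \<ge> \<kappa>")
      case True
      then have "(u - \<kappa>)^2 \<le> u^2" using assms by (simp add: power2_eq_square mult_mono)
      moreover have "\<kappa>^2 * u^2 \<le> u^2 * u^2"
        using True assms by (intro mult_right_mono power_mono) auto
      then have "u^2 \<le> u^4/\<kappa>^2" using assms by (simp add: field_simps power2_eq_square power4_eq_xxxx)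
      ultimately show ?thesis using True by (simp add: max_def)
    qed (simp add: max_def)
    then have "(max (u - \<kappa>) 0)^2 * pN u 1 \<le> u^4/\<kappa>^2 * pN u 1"
      using pN_nonneg by (rule mult_right_mono)
    then show "tail_integrand \<kappa> u \<le> pN u 1 * u^4 / \<kappa>^2"
      unfolding tail_integrand_def by (simp add: ac_simps)
  qed
  also have "\<dots> = 3/\<kappa>^2"
    using std_normal_moment_even[of 2]
    by (simp add: pN_1_eq_std_normal_density has_bochner_integral_iff fact_numeral)
  finally show ?thesis .
qed

definition gauss_taylor :: "real \<Rightarrow> real" where
  "gauss_taylor v = 1 - v^2/2 + v^4/8 - v^6/48 + v^8/384 - v^10/3840 + v^12/46080 - v^14/645120"

definition gauss_taylor_antideriv :: "real \<Rightarrow> real" where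
  "gauss_taylor_antideriv v =
     v - v^3/6 + v^5/40 - v^7/336 + v^9/3456 - v^11/42240 + v^13/599040 - v^15/9676800"

lemma gauss_taylor_le: "gauss_taylor v \<le> exp (-(v^2)/2)"
proof -
  obtain t where t: "exp (-(v^2)/2)
      = (\<Sum>m<8. ((-(v^2)/2) ^ m) / fact m) + (exp t / fact 8) * (-(v^2)/2) ^ 8"
    using Maclaurin_exp_le[of "-(v^2)/2" 8] by blast
  have "(\<Sum>m<8. ((-(v^2)/2) ^ m) / fact m) = gauss_taylor v"
    by (simp add: gauss_taylor_def eval_nat_numeral fact_numeral power_mult_distrib power_divide
        field_simps flip: power_mult)
  moreover have "(exp t / fact 8) * (-(v^2)/2) ^ 8 \<ge> 0"
    by (intro mult_nonneg_nonneg divide_nonneg_nonneg) (auto simp: zero_le_even_power)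
  ultimately show ?thesis using t by linarith
qed

lemma gauss_taylor_antideriv_has_real_derivative:
  "(gauss_taylor_antideriv has_real_derivative gauss_taylor v) (at v)"
  unfolding gauss_taylor_antideriv_def gauss_taylor_def
  by (auto intro!: derivative_eq_intros simp: field_simps eval_nat_numeral)

lemma sqrt_2pi_le: "sqrt (2*pi) \<le> 2.51"
proof -
  have "2*pi \<le> (2.51::real)^2" using pi_approx(2) by (simp add: power2_eq_square)
  then have "sqrt (2*pi) \<le> sqrt (2.51^2)" by (rule real_sqrt_le_mono)
  then show ?thesis by simp
qed

lemma std_normal_window_mass_ge:
  "ennreal 0.14 \<le> (\<integral>\<^sup>+v. ennreal (indicator {1..5/2} v * pN v 1) \<partial>lborel)"
proof -
  define c where "c = sqrt (2*pi)"
  have c: "c > 0" "c \<le> 2.51" using sqrt_2pi_le by (auto simp: c_def)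
  define f where "f = (\<lambda>v. indicator {1..5/2} v *\<^sub>R (gauss_taylor v / c))"
  have cont: "continuous_on {1..5/2} (\<lambda>v. gauss_taylor v / c)"
    unfolding gauss_taylor_def using c by (auto intro!: continuous_intros)
  have int: "integrable lborel f"
    using borel_integrable_atLeastAtMost'[OF cont] unfolding f_def set_integrable_def .
  have "integral\<^sup>L lborel f = gauss_taylor_antideriv (5/2) / c - gauss_taylor_antideriv 1 / c"
    unfolding f_def
  proof (rule integral_FTC_atLeastAtMost[OF _ _ cont])
    fix x :: real
    have "((\<lambda>v. gauss_taylor_antideriv v / c) has_real_derivative gauss_taylor x / c) (at x)"
      using gauss_taylor_antideriv_has_real_derivative[of x] c by (intro derivative_eq_intros) auto
    then show "((\<lambda>v. gauss_taylor_antideriv v / c) has_vector_derivative gauss_taylor x / c)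
        (at x within {1..5/2})"
      by (simp add: has_real_derivative_iff_has_vector_derivative has_vector_derivative_at_within)
  qed simp
  also have "gauss_taylor_antideriv (5/2) = 733104194815/604583755776"
    unfolding gauss_taylor_antideriv_def by (simp only: power_divide) simp
  also have "gauss_taylor_antideriv 1 = 394665989/461260800"
    unfolding gauss_taylor_antideriv_def by simp
  finally have "integral\<^sup>L lborel f = (1798396580941/5038197964800) / c" by (simp add: diff_divide_distrib)
  moreover have "0.14 \<le> (1798396580941/5038197964800) / c" using c by (simp add: field_simps)
  ultimately have "0.14 \<le> integral\<^sup>L lborel f" by simp
  also have "\<dots> \<le> integral\<^sup>L lborel (\<lambda>v. max (f v) 0)"
    using int by (intro integral_mono integrable_max) auto
  finally have "ennreal 0.14 \<le> ennreal (integral\<^sup>L lborel (\<lambda>v. max (f v) 0))" by simp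
  also have "\<dots> = (\<integral>\<^sup>+v. ennreal (max (f v) 0) \<partial>lborel)"
    using int by (intro nn_integral_eq_integral[symmetric] integrable_max) auto
  also have "\<dots> \<le> (\<integral>\<^sup>+v. ennreal (indicator {1..5/2} v * pN v 1) \<partial>lborel)"
  proof (rule nn_integral_mono)
    fix v
    have "gauss_taylor v / c \<le> pN v 1"
      using gauss_taylor_le[of v] c by (simp add: pN_def c_def divide_right_mono)
    then show "ennreal (max (f v) 0) \<le> ennreal (indicator {1..5/2} v * pN v 1)"
      unfolding f_def by (auto simp: indicator_def pN_def intro!: ennreal_leI)
  qed
  finally show ?thesis .
qed

lemma tail_moment_0_ge: "tail_moment 0 \<ge> 0.14"
proof -
  have "ennreal 0.14 \<le> (\<integral>\<^sup>+v. ennreal (indicator {1..5/2} v * pN v 1) \<partial>lborel)"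
    by (rule std_normal_window_mass_ge)
  also have "\<dots> \<le> (\<integral>\<^sup>+v. ennreal (tail_integrand 0 v) \<partial>lborel)"
  proof (rule nn_integral_mono)
    fix v :: real
    show "ennreal (indicator {1..5/2} v * pN v 1) \<le> ennreal (tail_integrand 0 v)"
    proof (cases "v \<in> {1..5/2}")
      case True
      then have "1 \<le> (max v 0)^2" by (simp add: max_def one_le_power)
      then have "1 * pN v 1 \<le> (max v 0)^2 * pN v 1" using pN_nonneg by (rule mult_right_mono)
      then show ?thesis using True by (auto simp: tail_integrand_def intro!: ennreal_leI)
    qed (simp add: tail_integrand_nonneg)
  qed
  also have "\<dots> = ennreal (tail_moment 0)" by (rule nn_integral_tail_integrand)
  finally show ?thesis by (simp add: ennreal_le_iff2)
qed

lemma tail_integrand_gap: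
  assumes k: "0 \<le> \<kappa>1" "\<kappa>1 < \<kappa>2" and u: "\<kappa>2 \<le> u" "u \<le> \<kappa>2 + 1"
  shows "tail_integrand \<kappa>2 u + (\<kappa>2 - \<kappa>1)^2 * pN (\<kappa>2 + 1) 1 \<le> tail_integrand \<kappa>1 u"
proof -
  have p: "pN (\<kappa>2 + 1) 1 \<le> pN u 1"
  proof -
    have "u^2 \<le> (\<kappa>2 + 1)^2" using u k by (intro power_mono) auto
    then show ?thesis unfolding pN_def by (simp add: divide_right_mono)
  qed
  have "(\<kappa>2 - \<kappa>1)*(\<kappa>2 - \<kappa>1) \<le> (\<kappa>2 - \<kappa>1)*(2*u - \<kappa>1 - \<kappa>2)"
    using u k by (intro mult_left_mono) auto
  then have d: "(\<kappa>2 - \<kappa>1)^2 \<le> (u - \<kappa>1)^2 - (u - \<kappa>2)^2" by (simp add: power2_eq_square algebra_simps)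
  moreover have "0 \<le> (u - \<kappa>1)^2 - (u - \<kappa>2)^2" using d by (meson order_trans zero_le_power2)
  ultimately have "(\<kappa>2 - \<kappa>1)^2 * pN (\<kappa>2 + 1) 1 \<le> ((u - \<kappa>1)^2 - (u - \<kappa>2)^2) * pN u 1"
    using p by (intro mult_mono) (auto simp: pN_nonneg)
  moreover have "max (u - \<kappa>2) 0 = u - \<kappa>2" "max (u - \<kappa>1) 0 = u - \<kappa>1" using u k by auto
  ultimately show ?thesis by (simp add: tail_integrand_def algebra_simps)
qed

lemma tail_moment_strict_antimono:
  assumes k: "0 \<le> \<kappa>1" "\<kappa>1 < \<kappa>2"
  shows "tail_moment \<kappa>2 < tail_moment \<kappa>1"
proof -
  define c where "c = (\<kappa>2 - \<kappa>1)^2 * pN (\<kappa>2 + 1) 1"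
  have c: "c > 0" using k by (simp add: c_def pN_def)
  have int_c: "integrable lborel (\<lambda>u. indicator {\<kappa>2..\<kappa>2 + 1} u *\<^sub>R c)"
    using borel_integrable_atLeastAtMost'[of \<kappa>2 "\<kappa>2 + 1" "\<lambda>_. c"] by (simp add: set_integrable_def)
  have "integral\<^sup>L lborel (\<lambda>u. indicator {\<kappa>2..\<kappa>2 + 1} u *\<^sub>R c) = c * (\<kappa>2 + 1) - c * \<kappa>2"
    by (rule integral_FTC_atLeastAtMost) (auto intro!: derivative_eq_intros
        simp: has_real_derivative_iff_has_vector_derivative[symmetric] has_field_derivative_at_within)
  then have "tail_moment \<kappa>2 + c
      = integral\<^sup>L lborel (\<lambda>u. tail_integrand \<kappa>2 u + indicator {\<kappa>2..\<kappa>2 + 1} u *\<^sub>R c)"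
    using integrable_tail_integrand int_c by (simp add: tail_moment_def algebra_simps)
  also have "\<dots> \<le> tail_moment \<kappa>1"
    unfolding tail_moment_def
  proof (rule integral_mono[OF _ integrable_tail_integrand])
    show "integrable lborel (\<lambda>u. tail_integrand \<kappa>2 u + indicator {\<kappa>2..\<kappa>2 + 1} u *\<^sub>R c)"
      using integrable_tail_integrand int_c by simp
    fix u
    show "tail_integrand \<kappa>2 u + indicator {\<kappa>2..\<kappa>2 + 1} u *\<^sub>R c \<le> tail_integrand \<kappa>1 u"
      using tail_integrand_gap[OF k, of u] tail_moment_antimono k
        mult_right_mono[OF power_mono[of "max (u - \<kappa>2) 0" "max (u - \<kappa>1) 0" 2] pN_nonneg[of u]]
      by (auto simp: indicator_def c_def tail_integrand_def)
  qed
  finally show ?thesis using c by simp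
qed

lemma Finv_nonneg_and_F_Finv:
  assumes e: "0 < \<epsilon>" "\<epsilon> < 0.28"
  shows "Finv \<epsilon> \<ge> 0 \<and> F (Finv \<epsilon>) = \<epsilon>"
proof -
  define K where "K = 6/\<epsilon> + 1"
  have K: "K \<ge> 1" using e unfolding K_def by simp
  have "tail_moment K \<le> 3/K^2" using tail_moment_le K by simp
  also have "3/K^2 \<le> 3/K" using K by (intro divide_left_mono) (auto simp: power2_eq_square)
  also have "3/K < \<epsilon>/2" using e K by (simp add: K_def field_simps)
  finally have "tail_moment K \<le> \<epsilon>/2" by simp
  moreover have "\<epsilon>/2 \<le> tail_moment 0" using tail_moment_0_ge e by simp
  moreover have "\<forall>x. 0 \<le> x \<and> x \<le> K \<longrightarrow> isCont tail_moment x"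
    using continuous_on_tail_moment by (simp add: continuous_on_eq_continuous_at)
  ultimately obtain k0 where k0: "0 \<le> k0" "tail_moment k0 = \<epsilon>/2"
    using IVT2[of tail_moment K "\<epsilon>/2" 0] K by auto
  have "Finv \<epsilon> = k0"
    unfolding Finv_def
  proof (rule the_equality)
    show "0 \<le> k0 \<and> F k0 = \<epsilon>" using k0 by (simp add: F_eq_tail_moment)
    fix k assume k: "0 \<le> k \<and> F k = \<epsilon>"
    then have "tail_moment k = tail_moment k0" using k0 by (simp add: F_eq_tail_moment)
    then show "k = k0" using tail_moment_strict_antimono k0 k
      by (metis less_irrefl linorder_neqE_linordered_idom)
  qed
  then show ?thesis using k0 by (simp add: F_eq_tail_moment)
qed

lemma tail_moment_le_of_Finv_le:
  assumes "0 < \<epsilon>" "\<epsilon> < 0.28" and "\<kappa> \<ge> Finv \<epsilon>"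
  shows "\<kappa> \<ge> 0" "2 * tail_moment \<kappa> \<le> \<epsilon>"
  using Finv_nonneg_and_F_Finv[OF assms(1,2)] tail_moment_antimono[OF assms(3)] assms(3)
  by (auto simp: F_eq_tail_moment)

section \<open>The loss of the smoothed score\<close>

lemma nn_integral_exp_decay:
  assumes "t > 0"
  shows "(\<integral>\<^sup>+x. ennreal (indicator {0..} x * exp (-x/t)) \<partial>lborel) = ennreal t"
proof -
  have "prob_space (density lborel (exponential_density (1/t)))"
    using assms by (intro prob_space_exponential_density) simp
  then have one: "(\<integral>\<^sup>+x. ennreal (exponential_density (1/t) x) \<partial>lborel) = 1"
    using prob_space.emeasure_space_1 by (fastforce simp: emeasure_density)
  have "ennreal (indicator {0..} x * exp (-x/t)) = ennreal t * ennreal (exponential_density (1/t) x)" for x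
    using assms by (auto simp: exponential_density_def indicator_def ennreal_mult[symmetric] field_simps)
  then have "(\<integral>\<^sup>+x. ennreal (indicator {0..} x * exp (-x/t)) \<partial>lborel)
      = ennreal t * (\<integral>\<^sup>+x. ennreal (exponential_density (1/t) x) \<partial>lborel)"
    by (simp add: nn_integral_cmult)
  then show ?thesis using one by simp
qed

lemma nn_integral_rescaled_tail:
  assumes t: "t > 0"
  shows "(\<integral>\<^sup>+x. ennreal (indicator {..1 - \<kappa> * sqrt t} x * ((1 - \<kappa> * sqrt t - x)^2 * gauss_pos t x)) \<partial>lborel)
    = ennreal (t * (sqrt (2*pi) * sqrt t) * tail_moment \<kappa>)"
proof -
  let ?f = "\<lambda>x. ennreal (indicator {..1 - \<kappa> * sqrt t} x * ((1 - \<kappa> * sqrt t - x)^2 * gauss_pos t x))"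
  have st: "sqrt t > 0" using t by simp
  have "(\<integral>\<^sup>+x. ?f x \<partial>lborel) = ennreal \<bar>- sqrt t\<bar> * (\<integral>\<^sup>+u. ?f (1 + (- sqrt t) * u) \<partial>lborel)"
    by (rule nn_integral_real_affine) (use st in \<open>auto simp: gauss_pos_def\<close>)
  also have "(\<lambda>u. ?f (1 + (- sqrt t) * u)) = (\<lambda>u. ennreal (t * sqrt (2*pi)) * ennreal (tail_integrand \<kappa> u))"
  proof
    fix u
    have "indicator {..1 - \<kappa> * sqrt t} (1 + (- sqrt t) * u) = (indicator {\<kappa>..} u :: real)"
      using st by (auto simp: indicator_def mult.commute)
    moreover have "(1 - \<kappa> * sqrt t - (1 + (- sqrt t) * u))^2 = t * (u - \<kappa>)^2"
      using t by (simp add: power2_eq_square algebra_simps)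
    moreover have "gauss_pos t (1 + (- sqrt t) * u) = exp (-(u^2)/2)"
      using t by (simp add: gauss_pos_def power_mult_distrib)
    moreover have "tail_integrand \<kappa> u = indicator {\<kappa>..} u * (u - \<kappa>)^2 * exp (-(u^2)/2) / sqrt (2*pi)"
      by (simp add: tail_integrand_def pN_def indicator_def max_def)
    ultimately show "?f (1 + (- sqrt t) * u) = ennreal (t * sqrt (2*pi)) * ennreal (tail_integrand \<kappa> u)"
      using t by (simp add: ennreal_mult[symmetric] indicator_def)
  qed
  also have "(\<integral>\<^sup>+u. ennreal (t * sqrt (2*pi)) * ennreal (tail_integrand \<kappa> u) \<partial>lborel)
     = ennreal (t * sqrt (2*pi)) * ennreal (tail_moment \<kappa>)"
    by (subst nn_integral_cmult) (auto simp: nn_integral_tail_integrand)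
  finally show ?thesis
    using st t tail_moment_nonneg[of \<kappa>] by (simp add: ennreal_mult[symmetric] mult_ac)
qed

definition loss_majorant :: "real \<Rightarrow> real \<Rightarrow> real \<Rightarrow> real" where
  "loss_majorant t \<delta> x =
     ((3/4) / (1 - \<delta>)^2 * (indicator {..1 - \<delta>} x * ((1 - \<delta> - x)^2 * gauss_pos t x))
      + 7 * exp (-1/(2*t)) * (indicator {0..} x * exp (-x/t))) / (sqrt (2*pi) * sqrt t * t^2)"

lemma loss_majorant_measurable [measurable]:
  "(\<lambda>x. ennreal (loss_majorant t \<delta> x)) \<in> borel_measurable borel"
  unfolding loss_majorant_def gauss_pos_def by measurable

lemma sq_error_weighted_le:
  fixes a b A :: real
  assumes a: "a > 0" and b: "b > 0" and A: "\<bar>A\<bar> \<le> 1"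
  shows "(A + 2*a/(a + b))^2 * (a + b)/2 \<le> 3/4 * A^2 * b + 7 * a"
proof -
  define B where "B = 2*a/(a + b)"
  have ab: "a + b > 0" using a b by simp
  have "(3/2)*A^2 + 3*B^2 - (A + B)^2 = (1/2) * (A - 2*B)^2"
    by (simp add: power2_eq_square algebra_simps)
  then have "(A + B)^2 \<le> (3/2)*A^2 + 3*B^2" using zero_le_power2[of "A - 2*B"] by linarith
  then have "(A + B)^2 * (a + b)/2 \<le> ((3/2)*A^2 + 3*B^2) * (a + b)/2"
    using ab by (intro divide_right_mono mult_right_mono) auto
  also have "\<dots> = 3/4 * A^2 * b + 3/4 * A^2 * a + 6 * a * (a/(a + b))"
  proof -
    have "((3/2)*A^2 + 3*(2*a/w)^2) * w/2 = 3/4 * A^2 * w + 6*a*(a/w)" if "w > 0" for w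
      using that by (simp add: field_simps power2_eq_square)
    from this[OF ab] show ?thesis unfolding B_def by (simp add: algebra_simps)
  qed
  also have "\<dots> \<le> 3/4 * A^2 * b + 3/4 * a + 6 * a"
  proof -
    have "A^2 \<le> 1" using A abs_square_le_1 by blast
    then have "3/4 * A^2 * a \<le> 3/4 * a" using a by simp
    moreover have "6 * a * (a/(a + b)) \<le> 6 * a * 1" using a b by (intro mult_left_mono) auto
    ultimately show ?thesis by simp
  qed
  also have "\<dots> \<le> 3/4 * A^2 * b + 7 * a" using a by simp
  finally show ?thesis unfolding B_def by simp
qed

lemma t_mul_shat_nonneg:
  assumes t: "t > 0" and d: "0 \<le> \<delta>" "\<delta> < 1" and x: "x \<ge> 0"
  shows "t * shat t \<delta> x = min (x/(1 - \<delta>) - 1) 0 - (x - 1)"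
proof (cases "1 - \<delta> \<le> x")
  case True
  then have "min (x/(1 - \<delta>) - 1) 0 = 0" using d by (simp add: field_simps)
  then show ?thesis using True x d t by (simp add: shat_def)
next
  case False
  then have "min (x/(1 - \<delta>) - 1) 0 = x/(1 - \<delta>) - 1" using d by (simp add: field_simps)
  moreover have "t * shat t \<delta> x = \<delta>/(1 - \<delta>) * x" using False x d t by (simp add: shat_def)
  moreover have "\<delta>/(1 - \<delta>) * x = x/(1 - \<delta>) - 1 - (x - 1)" using d by (simp add: field_simps)
  ultimately show ?thesis by linarith
qed

lemma loss_integrand_le_majorant:
  assumes t: "t > 0" and d: "0 \<le> \<delta>" "\<delta> < 1" and x: "x \<ge> 0"
  shows "(shat t \<delta> x - score t x)^2 * pt t x \<le> loss_majorant t \<delta> x"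
proof -
  define a where "a = gauss_neg t x"
  define b where "b = gauss_pos t x"
  define K where "K = sqrt (2*pi) * sqrt t"
  define A where "A = min (x/(1 - \<delta>) - 1) 0"
  have a: "a > 0" and b: "b > 0" and K: "K > 0" using t by (auto simp: a_def b_def K_def)
  have "t * shat t \<delta> x = A - (x - 1)" unfolding A_def by (rule t_mul_shat_nonneg[OF t d x])
  then have diff: "shat t \<delta> x - score t x = (A + 2*a/(a + b)) / t"
    using score_eq_right[OF t, of x] t unfolding a_def b_def by (simp add: field_simps)
  have A2: "A^2 = indicator {..1 - \<delta>} x * (1 - \<delta> - x)^2 / (1 - \<delta>)^2"
    using d by (auto simp: A_def indicator_def min_def power2_eq_square field_simps)
  have "\<bar>A\<bar> \<le> 1" using x d by (auto simp: A_def min_def field_simps)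
  then have "(A + 2*a/(a + b))^2 * (a + b)/2 \<le> 3/4 * A^2 * b + 7 * a"
    by (rule sq_error_weighted_le[OF a b])
  also have "\<dots> = 3/4 / (1 - \<delta>)^2 * (indicator {..1 - \<delta>} x * ((1 - \<delta> - x)^2 * b)) + 7 * a"
    unfolding A2 by simp
  also have "\<dots> \<le> 3/4 / (1 - \<delta>)^2 * (indicator {..1 - \<delta>} x * ((1 - \<delta> - x)^2 * b))
      + 7 * exp (-1/(2*t)) * (indicator {0..} x * exp (-x/t))"
    using gauss_neg_le[OF t, of x] x unfolding a_def by simp
  finally have "(A + 2*a/(a + b))^2 * (a + b)/2 / (K * t^2) \<le> loss_majorant t \<delta> x"
    using K t unfolding loss_majorant_def b_def K_def by (intro divide_right_mono) auto
  moreover have "(shat t \<delta> x - score t x)^2 * pt t x = (A + 2*a/(a + b))^2 * (a + b)/2 / (K * t^2)"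
    using t K unfolding diff pt_eq_gauss[OF t] a_def[symmetric] b_def[symmetric] K_def
    by (simp add: field_simps power2_eq_square)
  ultimately show ?thesis by simp
qed

lemma nn_integral_loss_majorant:
  assumes t: "t > 0" and d: "\<kappa> * sqrt t < 1"
  shows "(\<integral>\<^sup>+x. ennreal (loss_majorant t (\<kappa> * sqrt t) x) \<partial>lborel)
    = ennreal (((3/4) * tail_moment \<kappa> / (1 - \<kappa> * sqrt t)^2
        + 7 * exp (-1/(2*t)) / (sqrt (2*pi) * sqrt t)) / t)"
proof -
  define \<delta> where "\<delta> = \<kappa> * sqrt t"
  define K where "K = sqrt (2*pi) * sqrt t"
  define c1 where "c1 = (3/4)/(1 - \<delta>)^2 / (K * t^2)"
  define c2 where "c2 = 7 * exp (-1/(2*t)) / (K * t^2)"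
  define g1 where "g1 = (\<lambda>x. indicator {..1 - \<delta>} x * ((1 - \<delta> - x)^2 * gauss_pos t x))"
  define g2 where "g2 = (\<lambda>x. indicator {0..} x * exp (-x/t))"
  have K: "K > 0" and c: "c1 \<ge> 0" "c2 \<ge> 0" using t by (auto simp: K_def c1_def c2_def)
  have g: "g1 x \<ge> 0" "g2 x \<ge> 0" for x
    unfolding g1_def g2_def by (auto intro!: mult_nonneg_nonneg less_imp_le[OF gauss_pos_pos])
  have [measurable]: "g1 \<in> borel_measurable borel" "g2 \<in> borel_measurable borel"
    unfolding g1_def g2_def gauss_pos_def by measurable
  have "ennreal (loss_majorant t \<delta> x) = ennreal c1 * ennreal (g1 x) + ennreal c2 * ennreal (g2 x)" for x
  proof -
    have "loss_majorant t \<delta> x = c1 * g1 x + c2 * g2 x"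
      unfolding loss_majorant_def c1_def c2_def g1_def g2_def K_def by (simp add: add_divide_distrib)
    then show ?thesis using c g[of x] by (simp add: ennreal_mult ennreal_plus)
  qed
  then have "(\<integral>\<^sup>+x. ennreal (loss_majorant t \<delta> x) \<partial>lborel)
      = ennreal c1 * (\<integral>\<^sup>+x. ennreal (g1 x) \<partial>lborel) + ennreal c2 * (\<integral>\<^sup>+x. ennreal (g2 x) \<partial>lborel)"
    by (simp add: nn_integral_add nn_integral_cmult)
  also have "\<dots> = ennreal c1 * ennreal (t * K * tail_moment \<kappa>) + ennreal c2 * ennreal t"
    using nn_integral_rescaled_tail[OF t, of \<kappa>] nn_integral_exp_decay[OF t]
    by (simp add: g1_def g2_def \<delta>_def K_def mult.assoc)
  also have "\<dots> = ennreal (c1 * (t * K * tail_moment \<kappa>) + c2 * t)"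
    using c t K tail_moment_nonneg[of \<kappa>] by (simp add: ennreal_mult ennreal_plus)
  also have "c1 * (t * K * tail_moment \<kappa>) + c2 * t
      = ((3/4) * tail_moment \<kappa> / (1 - \<delta>)^2 + 7 * exp (-1/(2*t)) / K) / t"
    using t K d unfolding c1_def c2_def
    by (simp add: \<delta>_def[symmetric] field_simps, simp add: power2_eq_square algebra_simps)
  finally show ?thesis unfolding \<delta>_def K_def .
qed

lemma Lt_shat_le:
  assumes t: "t > 0" and k: "\<kappa> \<ge> 0" and d: "\<kappa> * sqrt t < 1"
  shows "Lt t (shat t (\<kappa> * sqrt t))
    \<le> ennreal ((3/2) * tail_moment \<kappa> / (1 - \<kappa> * sqrt t)^2 + 14 * exp (-1/(2*t)) / (sqrt (2*pi) * sqrt t))"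
proof -
  define \<delta> where "\<delta> = \<kappa> * sqrt t"
  have \<delta>: "0 \<le> \<delta>" "\<delta> < 1" using k t d by (auto simp: \<delta>_def)
  define G where "G = (\<lambda>x. ennreal (loss_majorant t \<delta> x))"
  define V where "V = ((3/4) * tail_moment \<kappa> / (1 - \<delta>)^2 + 7 * exp (-1/(2*t)) / (sqrt (2*pi) * sqrt t)) / t"
  have V: "V \<ge> 0" using t tail_moment_nonneg[of \<kappa>] by (simp add: V_def)
  have integrand_le: "ennreal ((shat t \<delta> x - score t x)^2 * pt t x) \<le> G x + G (-x)" for x
  proof (cases "x \<ge> 0")
    case True
    then show ?thesis
      using loss_integrand_le_majorant[OF t \<delta> True] by (simp add: G_def add_increasing2 ennreal_leI)
  next
    case False
    have "(shat t \<delta> x - score t x)^2 * pt t x = (shat t \<delta> (-x) - score t (-x))^2 * pt t (-x)"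
      using \<delta> by (simp add: shat_minus score_minus pt_minus[OF t] power2_commute)
    also have "\<dots> \<le> loss_majorant t \<delta> (-x)" using False by (intro loss_integrand_le_majorant[OF t \<delta>]) simp
    finally show ?thesis by (simp add: G_def add_increasing ennreal_leI)
  qed
  have "Lt t (shat t \<delta>) \<le> ennreal t * (\<integral>\<^sup>+x. G x + G (-x) \<partial>lborel)"
    unfolding Lt_def deriv_ln_pt[OF t] by (intro mult_left_mono nn_integral_mono integrand_le) auto
  also have "(\<integral>\<^sup>+x. G x + G (-x) \<partial>lborel) = 2 * (\<integral>\<^sup>+x. G x \<partial>lborel)"
    using nn_integral_real_affine[of G "-1" 0] by (simp add: G_def nn_integral_add mult_2)
  also have "(\<integral>\<^sup>+x. G x \<partial>lborel) = ennreal V"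
    unfolding G_def V_def \<delta>_def by (rule nn_integral_loss_majorant[OF t d])
  also have "ennreal t * (2 * ennreal V) = ennreal (t * (2 * V))"
    using t V by (simp add: ennreal_mult)
  also have "t * (2 * V)
      = (3/2) * tail_moment \<kappa> / (1 - \<delta>)^2 + 14 * exp (-1/(2*t)) / (sqrt (2*pi) * sqrt t)"
    using t unfolding V_def \<delta>_def[symmetric] by (simp add: field_simps)
  finally show ?thesis unfolding \<delta>_def .
qed

section \<open>Non-smoothness of functions with small loss\<close>

definition window :: "real \<Rightarrow> real \<Rightarrow> real \<Rightarrow> real set" where
  "window c s t = {x. 1 \<le> s * (x - c) / sqrt t \<and> s * (x - c) / sqrt t \<le> 5/2}"

lemma mem_window_pos: "t > 0 \<Longrightarrow> x \<in> window c 1 t \<longleftrightarrow> c + sqrt t \<le> x \<and> x \<le> c + 5/2 * sqrt t"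
  by (auto simp: window_def field_simps)

lemma mem_window_neg: "t > 0 \<Longrightarrow> x \<in> window c (-1) t \<longleftrightarrow> c - 5/2 * sqrt t \<le> x \<and> x \<le> c - sqrt t"
  by (auto simp: window_def field_simps)

lemma nn_integral_window:
  assumes t: "t > 0" and s: "s = 1 \<or> s = -1"
  shows "(\<integral>\<^sup>+x. ennreal (indicator (window c s t) x * pN (x - c) (sqrt t)) \<partial>lborel)
    = (\<integral>\<^sup>+v. ennreal (indicator {1..5/2} v * pN v 1) \<partial>lborel)"
proof -
  let ?f = "\<lambda>x. ennreal (indicator (window c s t) x * pN (x - c) (sqrt t))"
  have st: "sqrt t > 0" using t by simp
  have s2: "s * s = 1" "\<bar>s\<bar> = 1" "s^2 = 1" using s by auto
  have "?f \<in> borel_measurable borel" unfolding window_def pN_def by measurable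
  moreover have "s * sqrt t \<noteq> 0" using s st by auto
  ultimately have "(\<integral>\<^sup>+x. ?f x \<partial>lborel)
      = ennreal \<bar>s * sqrt t\<bar> * (\<integral>\<^sup>+v. ?f (c + (s * sqrt t) * v) \<partial>lborel)"
    by (rule nn_integral_real_affine)
  also have "(\<lambda>v. ?f (c + (s * sqrt t) * v))
      = (\<lambda>v. ennreal (1 / sqrt t) * ennreal (indicator {1..5/2} v * pN v 1))"
  proof
    fix v
    have e: "s * ((c + (s * sqrt t) * v) - c) / sqrt t = v" using st s2 by (simp add: field_simps)
    have "indicator (window c s t) (c + (s * sqrt t) * v) = (indicator {1..5/2} v :: real)"
      unfolding indicator_def window_def mem_Collect_eq e by simp
    moreover have "pN ((c + (s * sqrt t) * v) - c) (sqrt t) = (1 / sqrt t) * pN v 1"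
      using t st s2 by (simp add: pN_def power_mult_distrib field_simps)
    ultimately show "?f (c + (s * sqrt t) * v) = ennreal (1 / sqrt t) * ennreal (indicator {1..5/2} v * pN v 1)"
      using st by (simp add: ennreal_mult[symmetric] pN_nonneg mult_ac)
  qed
  also have "ennreal \<bar>s * sqrt t\<bar> * (\<integral>\<^sup>+v. ennreal (1 / sqrt t) * ennreal (indicator {1..5/2} v * pN v 1) \<partial>lborel)
      = (\<integral>\<^sup>+v. ennreal (indicator {1..5/2} v * pN v 1) \<partial>lborel)"
  proof -
    have "ennreal \<bar>s * sqrt t\<bar> * ennreal (1 / sqrt t) = 1"
      using st s2 by (simp add: abs_mult ennreal_mult[symmetric])
    moreover have "(\<lambda>v. ennreal (indicator {1..5/2} v * pN v 1)) \<in> borel_measurable borel"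
      unfolding pN_def by measurable
    ultimately show ?thesis by (subst nn_integral_cmult) (auto simp: mult.assoc[symmetric])
  qed
  finally show ?thesis .
qed

lemma loss_integrand_ge_of_far:
  fixes g :: "real \<Rightarrow> real"
  assumes t: "t > 0" "sqrt t \<le> 1/5" and c: "c = 1 \<or> c = -1" and s: "s = 1 \<or> s = -1"
    and x: "x \<in> window c s t" and \<rho>: "\<rho> \<ge> 0"
    and far: "sqrt t * \<rho> + 2 * exp (-1/t) \<le> \<bar>t * g x + (x - c)\<bar>"
  shows "\<rho>^2/(2*t) * pN (x - c) (sqrt t) \<le> (g x - score t x)^2 * pt t x"
proof -
  have st: "sqrt t > 0" using t by simp
  have "1 \<le> s * (x - c) / sqrt t" "s * (x - c) / sqrt t \<le> 5/2" using x by (auto simp: window_def)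
  then have "\<bar>x - c\<bar> \<le> 5/2 * sqrt t" using st s by (auto simp: field_simps abs_if split: if_splits)
  then have "\<bar>x - c\<bar> \<le> 1/2" using t(2) by linarith
  then have "x - c \<le> 1/2" "c - x \<le> 1/2" using abs_le_D1 abs_le_D2 by fastforce+
  then have "c * x \<ge> 1/2" using c by auto
  then have "\<bar>t * score t x + (x - c)\<bar> \<le> 2 * exp (-1/t)" by (rule score_error[OF t(1) c])
  then have "sqrt t * \<rho> \<le> \<bar>t * g x - t * score t x\<bar>" using far by linarith
  then have "(sqrt t * \<rho>)^2 \<le> \<bar>t * g x - t * score t x\<bar>^2"
    by (rule power_mono) (use st \<rho> in auto)
  then have "t * \<rho>^2 \<le> t * (t * (g x - score t x)^2)"
    using t by (simp add: power_mult_distrib power2_eq_square right_diff_distrib[symmetric] mult_ac)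
  then have "\<rho>^2 / t \<le> (g x - score t x)^2"
    using t by (simp add: pos_divide_le_eq mult.commute)
  moreover have "pN (x - c) (sqrt t) / 2 \<le> pt t x" using c st by (auto simp: pt_def pN_def)
  ultimately have "(\<rho>^2 / t) * (pN (x - c) (sqrt t) / 2) \<le> (g x - score t x)^2 * pt t x"
    using t by (intro mult_mono) (auto simp: pN_def)
  then show ?thesis by simp
qed

text \<open>A window has Gaussian mass at least 0.14 and \<open>p_t \<ge> pN (x - c) / 2\<close>, whence the constant 0.07.\<close>

lemma exists_near_score_in_window:
  fixes g :: "real \<Rightarrow> real"
  assumes t: "t > 0" "sqrt t \<le> 1/5" and L: "Lt t g < ennreal \<epsilon>"
    and c: "c = 1 \<or> c = -1" and s: "s = 1 \<or> s = -1"
    and \<rho>: "\<rho> > 0" "\<rho>^2 * 0.07 \<ge> \<epsilon>"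
  shows "\<exists>x\<in>window c s t. \<bar>t * g x + (x - c)\<bar> < sqrt t * \<rho> + 2 * exp (-1/t)"
proof (rule ccontr)
  assume "\<not> ?thesis"
  then have far: "x \<in> window c s t \<Longrightarrow> sqrt t * \<rho> + 2 * exp (-1/t) \<le> \<bar>t * g x + (x - c)\<bar>" for x
    by (auto simp: not_less)
  have pointwise: "ennreal (\<rho>^2/(2*t)) * ennreal (indicator (window c s t) x * pN (x - c) (sqrt t))
      \<le> ennreal ((g x - deriv (\<lambda>y. ln (pt t y)) x)^2 * pt t x)" for x
  proof (cases "x \<in> window c s t")
    case True
    have "\<rho>^2/(2*t) * pN (x - c) (sqrt t) \<le> (g x - score t x)^2 * pt t x"
      using loss_integrand_ge_of_far[where g = g, OF t c s True less_imp_le[OF \<rho>(1)] far[OF True]] .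
    then show ?thesis using True \<rho> t
      by (simp add: deriv_ln_pt[OF t(1)] ennreal_mult[symmetric] pN_def) (rule ennreal_leI)
  qed simp
  have "ennreal (\<rho>^2 * 0.07) = ennreal t * (ennreal (\<rho>^2/(2*t)) * ennreal 0.14)"
    using t by (simp add: ennreal_mult[symmetric])
  also have "\<dots> \<le> ennreal t * (ennreal (\<rho>^2/(2*t))
      * (\<integral>\<^sup>+x. ennreal (indicator (window c s t) x * pN (x - c) (sqrt t)) \<partial>lborel))"
    unfolding nn_integral_window[OF t(1) s] by (intro mult_left_mono std_normal_window_mass_ge) auto
  also have "\<dots> = ennreal t * (\<integral>\<^sup>+x. ennreal (\<rho>^2/(2*t))
      * ennreal (indicator (window c s t) x * pN (x - c) (sqrt t)) \<partial>lborel)"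
    by (subst nn_integral_cmult) (auto simp: window_def pN_def)
  also have "\<dots> \<le> Lt t g"
    unfolding Lt_def by (intro mult_left_mono nn_integral_mono pointwise) auto
  finally have "ennreal \<epsilon> \<le> Lt t g" using \<rho>(2) by (meson ennreal_leI order_trans)
  then show False using L by simp
qed

lemma chord_slope_le_of_near:
  fixes g :: "real \<Rightarrow> real"
  assumes t: "t > 0" and y: "y1 + 2 * sqrt t \<le> y2" and r: "r \<ge> 0"
    and near1: "\<bar>t * g y1 + (y1 - c)\<bar> < sqrt t * r" and near2: "\<bar>t * g y2 + (y2 - c)\<bar> < sqrt t * r"
  shows "(g y2 - g y1)/(y2 - y1) \<le> - ((1 - r)/t)"
proof -
  have "sqrt t > 0" using t by simp
  then have d: "y2 - y1 > 0" using y by linarith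
  have "r * (2 * sqrt t) \<le> r * (y2 - y1)" using y r by (intro mult_left_mono) auto
  then have "t * (g y2 - g y1) \<le> (r - 1) * (y2 - y1)"
    using near1 near2 by (simp add: abs_less_iff algebra_simps)
  then have "(g y2 - g y1)/(y2 - y1) \<le> (r - 1)/t"
    using t d by (simp add: pos_divide_le_eq pos_le_divide_eq mult.commute divide_le_eq)
  then show ?thesis by (simp add: minus_divide_left)
qed

lemma Rns_ge_of_Lt_less:
  fixes g :: "real \<Rightarrow> real"
  assumes t: "t > 0" "sqrt t \<le> 1/5" and adm: "admissible g" and L: "Lt t g < ennreal \<epsilon>"
    and \<rho>: "\<rho> > 0" "\<rho>^2 * 0.07 \<ge> \<epsilon>" and r1: "\<rho> + 2 * exp (-1/t) / sqrt t < 1"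
  shows "ereal (2 * (1 - (\<rho> + 2 * exp (-1/t) / sqrt t)) / t) \<le> Rns g"
proof -
  define r where "r = \<rho> + 2 * exp (-1/t) / sqrt t"
  have st: "sqrt t > 0" using t by simp
  have r0: "r \<ge> 0" and r1: "r < 1" using \<rho> st r1 by (simp_all add: r_def)
  have "sqrt t * \<rho> + 2 * exp (-1/t) = sqrt t * r" using st by (simp add: r_def field_simps)
  then have near: "\<exists>x\<in>window c s t. \<bar>t * g x + (x - c)\<bar> < sqrt t * r"
    if "c = 1 \<or> c = -1" "s = 1 \<or> s = -1" for c s
    using exists_near_score_in_window[OF t L that \<rho>] by metis
  obtain y1 y2 y3 y4 where
    y1: "y1 \<le> -1 - sqrt t" "\<bar>t * g y1 + (y1 + 1)\<bar> < sqrt t * r" and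
    y2: "-1 + sqrt t \<le> y2" "y2 \<le> -1 + 5/2 * sqrt t" "\<bar>t * g y2 + (y2 + 1)\<bar> < sqrt t * r" and
    y3: "1 - 5/2 * sqrt t \<le> y3" "y3 \<le> 1 - sqrt t" "\<bar>t * g y3 + (y3 - 1)\<bar> < sqrt t * r" and
    y4: "1 + sqrt t \<le> y4" "\<bar>t * g y4 + (y4 - 1)\<bar> < sqrt t * r"
    using near[of "-1" "-1"] near[of "-1" 1] near[of 1 "-1"] near[of 1 1]
    by (auto simp: mem_window_pos[OF t(1)] mem_window_neg[OF t(1)])
  have neg: "sqrt t * r - sqrt t < 0" using r1 st by (simp add: mult_less_cancel_left1)
  have "t * g y2 < 0" using y2 neg unfolding abs_less_iff by linarith
  then have "g y2 < 0" using t by (simp add: mult_less_0_iff)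
  have "t * g y3 > 0" using y3 neg unfolding abs_less_iff by linarith
  then have "g y3 > 0" using t by (simp add: zero_less_mult_iff)
  with \<open>g y2 < 0\<close> have g23: "g y2 \<le> g y3" by simp
  have s12: "(g y2 - g y1)/(y2 - y1) \<le> - ((1 - r)/t)"
    using y1 y2 by (intro chord_slope_le_of_near[OF t(1) _ r0, of _ _ _ "-1"]) auto
  have s34: "(g y4 - g y3)/(y4 - y3) \<le> - ((1 - r)/t)"
    using y3 y4 by (intro chord_slope_le_of_near[OF t(1) _ r0, of _ _ _ 1]) auto
  have "y1 < y2" "y2 < y3" "y3 < y4" using y1(1) y2(1,2) y3(1,2) y4(1) st t(2) by linarith+
  from Rns_ge_of_chords[OF adm this s12 g23 s34] have "ereal (2 * ((1 - r)/t)) \<le> Rns g" .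
  then show ?thesis by (simp add: r_def)
qed

lemma rstar_ge:
  assumes "t > 0" "sqrt t \<le> 1/5" "\<rho> > 0" "\<rho>^2 * 0.07 \<ge> \<epsilon>" "\<rho> + 2 * exp (-1/t) / sqrt t < 1"
  shows "ereal (2 * (1 - (\<rho> + 2 * exp (-1/t) / sqrt t)) / t) \<le> rstar t \<epsilon>"
  unfolding rstar_def by (rule Inf_greatest) (use Rns_ge_of_Lt_less[OF assms(1,2) _ _ assms(3-)] in blast)

section \<open>Small noise asymptotics\<close>

lemma small_eps_bounds:
  assumes "0 < \<epsilon>" "\<epsilon> < 0.015"
  shows "(1 + 8 * sqrt \<epsilon>) * (1 - 3.8 * sqrt \<epsilon>) > 1" "3.8 * sqrt \<epsilon> > 0"
    "(3.8 * sqrt \<epsilon>)^2 * 0.07 \<ge> \<epsilon>" "3.8 * sqrt \<epsilon> < 1"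
proof -
  define q where "q = sqrt \<epsilon>"
  have q: "q > 0" "q^2 = \<epsilon>" using assms by (simp_all add: q_def)
  have "q < 0.13"
  proof (rule ccontr)
    assume "\<not> q < 0.13"
    then have "0.13^2 \<le> q^2" by (intro power_mono) auto
    then show False using q assms by (simp add: power2_eq_square)
  qed
  have "(1 + 8 * q) * (1 - 3.8 * q) = 1 + q * (4.2 - 30.4 * q)" by (simp add: field_simps)
  moreover have "q * (4.2 - 30.4 * q) > 0" using q \<open>q < 0.13\<close> by (intro mult_pos_pos) auto
  ultimately show "(1 + 8 * sqrt \<epsilon>) * (1 - 3.8 * sqrt \<epsilon>) > 1" unfolding q_def by simp
  show "3.8 * sqrt \<epsilon> > 0" "3.8 * sqrt \<epsilon> < 1" using q \<open>q < 0.13\<close> by (simp_all add: q_def)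
  have "(3.8*q)^2 * 0.07 \<ge> q^2" by (simp add: power_mult_distrib power_divide)
  then show "(3.8 * sqrt \<epsilon>)^2 * 0.07 \<ge> \<epsilon>" using q unfolding q_def by simp
qed

lemma tendsto_scaled_sqrt_at_right_0: "((\<lambda>t. \<kappa> * sqrt t) \<longlongrightarrow> 0) (at_right 0)"
  by real_asymp

lemma eventually_scaled_sqrt_less: "c > 0 \<Longrightarrow> eventually (\<lambda>t. \<kappa> * sqrt t < c) (at_right 0)"
  using order_tendstoD(2)[OF tendsto_scaled_sqrt_at_right_0] .

lemma eventually_Lt_shat_less:
  assumes "0 < \<epsilon>" "0 \<le> \<kappa>" "2 * tail_moment \<kappa> \<le> \<epsilon>"
  shows "eventually (\<lambda>t. Lt t (shat t (\<kappa> * sqrt t)) < ennreal \<epsilon>) (at_right 0)"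
proof -
  define f where "f t = (3/4) * \<epsilon> / (1 - \<kappa> * sqrt t)^2 + 14 / sqrt (2*pi) * (exp (-1/(2*t)) / sqrt t)"
    for t
  have "((\<lambda>t. exp (-1/(2*t)) / sqrt t) \<longlongrightarrow> 0) (at_right 0)" by real_asymp
  then have "(f \<longlongrightarrow> (3/4) * \<epsilon> / (1 - 0)^2 + 14 / sqrt (2*pi) * 0) (at_right 0)"
    unfolding f_def by (intro tendsto_intros tendsto_scaled_sqrt_at_right_0) auto
  from order_tendstoD(2)[OF this, of \<epsilon>] have "eventually (\<lambda>t. f t < \<epsilon>) (at_right 0)"
    using assms(1) by simp
  moreover have "eventually (\<lambda>t. \<kappa> * sqrt t < 1) (at_right 0)" by (simp add: eventually_scaled_sqrt_less)
  ultimately show ?thesis using eventually_at_right_less[of 0]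
  proof eventually_elim
    case (elim t)
    have "Lt t (shat t (\<kappa> * sqrt t)) \<le> ennreal ((3/2) * tail_moment \<kappa> / (1 - \<kappa> * sqrt t)^2
        + 14 * exp (-1/(2*t)) / (sqrt (2*pi) * sqrt t))"
      using elim assms(2) by (intro Lt_shat_le) auto
    also have "\<dots> \<le> ennreal (f t)"
    proof -
      have "(3/2) * tail_moment \<kappa> \<le> (3/4) * \<epsilon>" using assms(3) by simp
      then have "(3/2) * tail_moment \<kappa> / (1 - \<kappa> * sqrt t)^2 \<le> (3/4) * \<epsilon> / (1 - \<kappa> * sqrt t)^2"
        by (rule divide_right_mono) simp
      then show ?thesis by (intro ennreal_leI) (simp add: f_def)
    qed
    also have "\<dots> < ennreal \<epsilon>" using elim assms(1) by (simp add: ennreal_lessI)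
    finally show ?case .
  qed
qed

lemma Rns_shat_less_rstar:
  assumes t: "t > 0" "sqrt t \<le> 1/5" and \<delta>: "0 \<le> \<delta>" "\<delta> < 1"
    and \<rho>: "\<rho> > 0" "\<rho>^2 * 0.07 \<ge> \<epsilon>" and r: "r = \<rho> + 2 * exp (-1/t) / sqrt t" "r < 1"
    and C: "C > 0" "(1 - \<delta>) * C * (1 - r) > 1"
  shows "Rns (shat t \<delta>) < ereal C * rstar t \<epsilon>"
proof -
  have "2 / ((1 - \<delta>) * t) < 2 * ((1 - \<delta>) * C * (1 - r)) / ((1 - \<delta>) * t)"
    using C t \<delta> by (intro divide_strict_right_mono) auto
  also have "\<dots> = C * (2 * (1 - r) / t)" using t \<delta> by (simp add: field_simps)
  finally have strict: "2 / ((1 - \<delta>) * t) < C * (2 * (1 - r) / t)" .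
  have "Rns (shat t \<delta>) \<le> ereal (2 / ((1 - \<delta>) * t))" by (rule Rns_shat_le[OF t(1) \<delta>])
  also have "\<dots> < ereal C * ereal (2 * (1 - r) / t)" using strict by simp
  also have "\<dots> \<le> ereal C * rstar t \<epsilon>"
    using rstar_ge[OF t \<rho>] r C by (intro ereal_mult_left_mono) auto
  finally show ?thesis .
qed

lemma eventually_Rns_shat_less:
  assumes \<epsilon>: "0 < \<epsilon>" "\<epsilon> < 0.015" and "0 \<le> \<kappa>"
  shows "eventually (\<lambda>t. Rns (shat t (\<kappa> * sqrt t)) < ereal (1 + 8 * sqrt \<epsilon>) * rstar t \<epsilon>) (at_right 0)"
proof -
  define \<rho> where "\<rho> = 3.8 * sqrt \<epsilon>"
  define C where "C = 1 + 8 * sqrt \<epsilon>"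
  define r where "r t = \<rho> + 2 * exp (-1/t) / sqrt t" for t
  note \<rho> = small_eps_bounds[OF \<epsilon>, folded \<rho>_def C_def]
  have "((\<lambda>t. 2 * exp (-1/t) / sqrt t) \<longlongrightarrow> 0) (at_right 0)" by real_asymp
  from tendsto_add[OF tendsto_const this] have r_lim: "(r \<longlongrightarrow> \<rho>) (at_right 0)"
    unfolding r_def by simp
  have "((\<lambda>t. (1 - \<kappa> * sqrt t) * C * (1 - r t)) \<longlongrightarrow> (1 - 0) * C * (1 - \<rho>)) (at_right 0)"
    by (intro tendsto_intros tendsto_scaled_sqrt_at_right_0 r_lim)
  then have "eventually (\<lambda>t. (1 - \<kappa> * sqrt t) * C * (1 - r t) > 1) (at_right 0)"
    using \<rho>(1) by (auto dest: order_tendstoD(1))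
  moreover have "eventually (\<lambda>t. r t < 1) (at_right 0)"
    using order_tendstoD(2)[OF r_lim, of 1] \<rho>(4) by simp
  moreover have "eventually (\<lambda>t. \<kappa> * sqrt t < 1) (at_right 0)" by (simp add: eventually_scaled_sqrt_less)
  moreover have "eventually (\<lambda>t. sqrt t < 1/5) (at_right 0)"
    using eventually_scaled_sqrt_less[of "1/5" 1] by simp
  ultimately show ?thesis using eventually_at_right_less[of 0]
  proof eventually_elim
    case (elim t)
    have "C > 0" using \<epsilon> by (simp add: C_def add_pos_nonneg)
    with elim assms(3) show ?case
      unfolding C_def[symmetric] by (intro Rns_shat_less_rstar[OF _ _ _ _ \<rho>(2,3) r_def]) auto
  qed
qed

theorem mainTheorem1:
  fixes \<epsilon> \<kappa> :: real
  assumes "0 < \<epsilon>" and "\<epsilon> < 0.015" and "\<kappa> \<ge> Finv \<epsilon>"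
  shows "\<exists>t1>0. \<forall>t. 0 < t \<and> t < t1 \<longrightarrow>
           Lt t (shat t (\<kappa> * sqrt t)) < ennreal \<epsilon>
         \<and> admissible (shat t (\<kappa> * sqrt t))
         \<and> Rns (shat t (\<kappa> * sqrt t)) < ereal (1 + 8 * sqrt \<epsilon>) * rstar t \<epsilon>"
proof -
  have \<kappa>: "\<kappa> \<ge> 0" "2 * tail_moment \<kappa> \<le> \<epsilon>"
    using tail_moment_le_of_Finv_le[OF assms(1) _ assms(3)] assms(2) by auto
  have "eventually (\<lambda>t. \<kappa> * sqrt t < 1) (at_right 0)" by (simp add: eventually_scaled_sqrt_less)
  then have "eventually (\<lambda>t. admissible (shat t (\<kappa> * sqrt t))) (at_right 0)"
    using eventually_at_right_less[of 0] by eventually_elim (use \<kappa> in \<open>auto intro: admissible_shat\<close>)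
  with eventually_Lt_shat_less[OF assms(1) \<kappa>] eventually_Rns_shat_less[OF assms(1,2) \<kappa>(1)]
  have "eventually (\<lambda>t. Lt t (shat t (\<kappa> * sqrt t)) < ennreal \<epsilon> \<and> admissible (shat t (\<kappa> * sqrt t))
      \<and> Rns (shat t (\<kappa> * sqrt t)) < ereal (1 + 8 * sqrt \<epsilon>) * rstar t \<epsilon>) (at_right 0)"
    by eventually_elim blast
  then show ?thesis unfolding eventually_at_right_field by blast
qed

end
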